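(* Assume: every admissible noise $e=y_\delta-y$ (with $\|e\|\le\delta$) satisfies MC$_2$ with a common constant $C_2$; $x^\dagger\neq0$ satisfies $x^\dagger=(A^*A)^\mu\omega$, $\|\omega\|\le C_s$, with $0<\mu\le1$. Let $\alpha^*$ be a minimizer over $(0,\alpha_{\max})$ of the simple-L ratio functional $\psi_{SLR}$, and put $\tilde\mu=\min\{\mu,\tfrac12\}$. Then there exist $C>0$ and $\delta_0>0$, independent of $\delta$ and $e$, such that for all $0<\delta\le\delta_0$ $$\|x_{\alpha^*}^\delta-x^\dagger\|\le C\,\delta^{\frac{2\tilde\mu}{2\tilde\mu+1}\,2\tilde\mu};$$ and if in addition there is $D>0$ with $\sum_{\lambda_i\le\alpha}|\langle x^\dagger,u_i\rangle|^2\le D\sum_{\lambda_i\ge\alpha}\frac{\alpha}{\lambda_i}|\langle x^\dagger,u_i\rangle|^2$ for all $\alpha\in(0,\alpha_{\max})$, then for all $0<\delta\le\delta_0$ $$\|x_{\alpha^*}^\delta-x^\dagger\|\le C\,\delta^{\frac{2\tilde\mu}{2\tilde\mu+1}}.$$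
   Context: Let $X,Y$ be real Hilbert spaces and $A:X\to Y$ a compact linear operator with singular system $(\sigma_i,u_i,v_i)_i$, $\sigma_i>0$; put $\lambda_i=\sigma_i^2$. Let $x^\dagger\in N(A)^\perp$ be the minimum-norm solution, $y=Ax^\dagger$, $y_\delta=y+e$ with $\|e\|\le\delta$. Tikhonov regularization: $x_\alpha^\delta=(A^*A+\alpha I)^{-1}A^*y_\delta$, $\alpha\in(0,\alpha_{\max})$. Simple-L functional $\psi_{SL}(\alpha):=\big(\sum_i\frac{\alpha\lambda_i}{(\lambda_i+\alpha)^3}|\langle y_\delta,v_i\rangle|^2\big)^{1/2}=\big(-\tfrac12\alpha\tfrac{d}{d\alpha}\|x_\alpha^\delta\|^2\big)^{1/2}$; simple-L ratio functional $\psi_{SLR}(\alpha):=\psi_{SL}(\alpha)/\|x_\alpha^\delta\|$. Condition MC$_2$ with constant $C_2$: for all $0<\alpha\le\alpha_{\max}$, $\sum_{\lambda_i\ge\alpha}\frac{\alpha}{\lambda_i}|\langle e,v_i\rangle|^2\le C_2\sum_{\lambda_i\le\alpha}\frac{\lambda_i}{\alpha}|\langle e,v_i\rangle|^2$. *)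

theory Defs
  imports "HOL-Analysis.Analysis"
begin

definition compact_op :: "('a::real_normed_vector \<Rightarrow> 'b::real_normed_vector) \<Rightarrow> bool" where
  "compact_op A \<longleftrightarrow> bounded_linear A \<and> (\<forall>S. bounded S \<longrightarrow> compact (closure (A ` S)))"

definition orthonormal_on :: "nat set \<Rightarrow> (nat \<Rightarrow> 'a::real_inner) \<Rightarrow> bool" where
  "orthonormal_on I u \<longleftrightarrow> (\<forall>i\<in>I. \<forall>j\<in>I. inner (u i) (u j) = (if i = j then 1 else 0))"

definition singular_system ::
  "('a::real_inner \<Rightarrow> 'b::real_inner) \<Rightarrow> nat set \<Rightarrow> (nat \<Rightarrow> real) \<Rightarrow> (nat \<Rightarrow> 'a) \<Rightarrow> (nat \<Rightarrow> 'b) \<Rightarrow> bool" where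
  "singular_system A I \<sigma> u v \<longleftrightarrow>
     (\<forall>i\<in>I. \<sigma> i > 0) \<and> orthonormal_on I u \<and> orthonormal_on I v \<and>
     (\<forall>x. ((\<lambda>i. (\<sigma> i * inner x (u i)) *\<^sub>R v i) has_sum A x) I)"

text \<open>Tikhonov regularized solution x = (A*A + alpha I)^{-1} A* y, characterised by the
  (weak form of the) normal equation <A x - y, A z> + alpha <x, z> = 0 for all z.\<close>
definition tikh :: "('a::real_inner \<Rightarrow> 'b::real_inner) \<Rightarrow> real \<Rightarrow> 'b \<Rightarrow> 'a" where
  "tikh A \<alpha> y = (THE x. \<forall>z. inner (A x - y) (A z) + \<alpha> * inner x z = 0)"

definition psiSL :: "nat set \<Rightarrow> (nat \<Rightarrow> real) \<Rightarrow> (nat \<Rightarrow> 'b::real_inner) \<Rightarrow> 'b \<Rightarrow> real \<Rightarrow> real" where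
  "psiSL I \<sigma> v y \<alpha> =
     sqrt (\<Sum>\<^sub>\<infinity>i\<in>I. \<alpha> * (\<sigma> i)\<^sup>2 / ((\<sigma> i)\<^sup>2 + \<alpha>) ^ 3 * (inner y (v i))\<^sup>2)"

definition psiSLR ::
  "('a::real_inner \<Rightarrow> 'b::real_inner) \<Rightarrow> nat set \<Rightarrow> (nat \<Rightarrow> real) \<Rightarrow> (nat \<Rightarrow> 'b) \<Rightarrow> 'b \<Rightarrow> real \<Rightarrow> real" where
  "psiSLR A I \<sigma> v y \<alpha> = psiSL I \<sigma> v y \<alpha> / norm (tikh A \<alpha> y)"

definition MC2 :: "real \<Rightarrow> nat set \<Rightarrow> (nat \<Rightarrow> real) \<Rightarrow> (nat \<Rightarrow> 'b::real_inner) \<Rightarrow> real \<Rightarrow> 'b \<Rightarrow> bool" where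
  "MC2 C2 I \<sigma> v \<alpha>max e \<longleftrightarrow>
     (\<forall>\<alpha>. 0 < \<alpha> \<and> \<alpha> \<le> \<alpha>max \<longrightarrow>
        (\<Sum>\<^sub>\<infinity>i\<in>{i\<in>I. (\<sigma> i)\<^sup>2 \<ge> \<alpha>}. \<alpha> / (\<sigma> i)\<^sup>2 * (inner e (v i))\<^sup>2)
        \<le> C2 * (\<Sum>\<^sub>\<infinity>i\<in>{i\<in>I. (\<sigma> i)\<^sup>2 \<le> \<alpha>}. (\<sigma> i)\<^sup>2 / \<alpha> * (inner e (v i))\<^sup>2))"

text \<open>(A*A)^mu w via the spectral decomposition of A*A (eigenvalues lambda_i = sigma_i^2,
  eigenvectors u_i; the null space part vanishes since mu > 0).\<close>
definition AstarA_pow ::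
  "nat set \<Rightarrow> (nat \<Rightarrow> real) \<Rightarrow> (nat \<Rightarrow> 'a::{real_inner,complete_space}) \<Rightarrow> real \<Rightarrow> 'a \<Rightarrow> 'a" where
  "AstarA_pow I \<sigma> u \<mu> w = (\<Sum>\<^sub>\<infinity>i\<in>I. (((\<sigma> i)\<^sup>2) powr \<mu> * inner w (u i)) *\<^sub>R u i)"

end

theory Submission
  imports Defs
begin

text \<open>In the coordinates of the singular system the simple-L ratio is
  \<open>\<psi>\<^sub>S\<^sub>L(\<alpha>)\<^sup>2 / \<parallel>x\<^sub>\<alpha>\<^sup>\<delta>\<parallel>\<^sup>2\<close>, a ratio of two explicit weighted sums of \<open>\<langle>y\<^sub>\<delta>, v\<^sub>i\<rangle>\<^sup>2\<close>.
  Compare the minimiser \<open>\<alpha>\<^sup>*\<close> with the reference value \<open>b = \<delta>\<^bsup>2/(2m+1)\<^esup>\<close>, \<open>m = min \<mu> (1/2)\<close>.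
  At \<open>b\<close> the numerator is \<open>O(b\<^sup>2\<^sup>m + \<delta>\<^sup>2/b)\<close> by the source condition, while the
  denominator stays away from zero because \<open>x\<^sup>\<dagger> \<noteq> 0\<close>; hence the ratio at \<open>\<alpha>\<^sup>*\<close> is
  \<open>O(\<rho>)\<close> with \<open>\<rho> = \<delta>\<^bsup>4m/(2m+1)\<^esup>\<close>.
  If \<open>\<alpha>\<^sup>* \<ge> b\<close>, the propagated noise is \<open>O(\<rho>)\<close> and the noise-free part of \<open>\<psi>\<^sub>S\<^sub>L\<^sup>2\<close>,
  which is at least of order \<open>\<alpha>\<^sup>*\<close>, is \<open>O(\<rho>)\<close>, so the bias is \<open>O((\<alpha>\<^sup>*)\<^sup>2\<^sup>m) = O(\<rho>\<^sup>2\<^sup>m)\<close>;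
  under the additional balance condition on \<open>x\<^sup>\<dagger>\<close> the bias is even \<open>O(\<rho>)\<close>.
  If \<open>\<alpha>\<^sup>* < b\<close>, the bias is \<open>O(b\<^sup>2\<^sup>m)\<close>, and MC\<open>\<^sub>2\<close> bounds the propagated noise by
  \<open>\<psi>\<^sub>S\<^sub>L(\<alpha>\<^sup>*)\<^sup>2\<close>, which the ratio bound controls.\<close>

lemma sq_add_le: "(p + q)\<^sup>2 \<le> 2 * p\<^sup>2 + 2 * (q::real)\<^sup>2"
proof -
  have "2 * p\<^sup>2 + 2 * q\<^sup>2 - (p + q)\<^sup>2 = (p - q)\<^sup>2" by (simp add: power2_eq_square algebra_simps)
  thus ?thesis by (smt (verit) zero_le_power2)
qed

lemma sq_diff_le: "(p - q)\<^sup>2 \<le> 2 * p\<^sup>2 + 2 * (q::real)\<^sup>2"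
  using sq_add_le[of p "-q"] by simp

lemma four_mult_le_sq_add: "4 * a * l \<le> (l + a)\<^sup>2" for a l :: real
proof -
  have "(l + a)\<^sup>2 - 4 * a * l = (l - a)\<^sup>2" by (simp add: power2_eq_square algebra_simps)
  thus ?thesis by (smt (verit) zero_le_power2)
qed

lemma tikh_weight_le: "0 < l \<Longrightarrow> 0 < (a::real) \<Longrightarrow> l / (l + a)\<^sup>2 \<le> 1 / (4 * a)"
  using four_mult_le_sq_add[of a l] by (simp add: divide_simps mult.commute mult.left_commute)

lemma simpleL_weight_le: "0 < l \<Longrightarrow> 0 < (a::real) \<Longrightarrow> a * l / (l + a) ^ 3 \<le> 1 / (4 * a)"
proof -
  assume l: "0 < l" and a: "0 < a"
  have "4 * a * (a * l) \<le> (l + a)\<^sup>2 * a"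
    using four_mult_le_sq_add[of a l] a by (simp add: mult_right_mono algebra_simps)
  also have "\<dots> \<le> (l + a)\<^sup>2 * (l + a)" using l a by (intro mult_left_mono) auto
  also have "\<dots> = (l + a) ^ 3" by (simp add: power2_eq_square power3_eq_cube)
  finally show ?thesis using l a by (simp add: divide_simps mult.commute mult.left_commute)
qed

lemma powr_sq_le_split:
  fixes l L m \<mu> :: real
  assumes "0 < l" "l \<le> L" "0 < m" "m \<le> \<mu>"
  shows "(l powr \<mu>)\<^sup>2 \<le> l powr (2 * m) * L powr (2 * \<mu> - 2 * m)"
proof -
  have "(l powr \<mu>)\<^sup>2 = l powr (\<mu> + \<mu>)"
    by (subst powr_add) (simp add: power2_eq_square)
  also have "\<dots> = l powr (2 * m + (2 * \<mu> - 2 * m))" by simp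
  also have "\<dots> = l powr (2 * m) * l powr (2 * \<mu> - 2 * m)" by (rule powr_add)
  also have "\<dots> \<le> l powr (2 * m) * L powr (2 * \<mu> - 2 * m)"
    using assms by (intro mult_left_mono powr_mono2) auto
  finally show ?thesis .
qed

text \<open>Saturation: the next two bounds hold only for \<open>m \<le> 1/2\<close>, which is where
  \<open>min \<mu> (1/2)\<close> in the convergence rates comes from.\<close>

lemma simpleL_weight_powr_le:
  fixes l a m :: real
  assumes l: "0 < l" and a: "0 < a" and m: "0 < m" "m \<le> 1/2"
  shows "a * l\<^sup>2 * l powr (2 * m) \<le> a powr (2 * m) * (l + a) ^ 3"
proof -
  have e1: "a powr (2 * m) * a powr (1 - 2 * m) = a"
    using a by (subst powr_add[symmetric]) simp
  have e2: "l powr (2 + 2 * m) = l\<^sup>2 * l powr (2 * m)"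
    using l by (subst powr_add) simp
  have "a * l\<^sup>2 * l powr (2 * m) = a powr (2 * m) * (a powr (1 - 2 * m) * l powr (2 + 2 * m))"
    unfolding e2 mult.assoc[symmetric] e1 by simp
  also have "\<dots> \<le> a powr (2 * m) * ((l + a) powr (1 - 2 * m) * (l + a) powr (2 + 2 * m))"
    using l a m by (intro mult_left_mono mult_mono powr_mono2) auto
  also have "(l + a) powr (1 - 2 * m) * (l + a) powr (2 + 2 * m) = (l + a) ^ 3"
    using l a by (subst powr_add[symmetric]) simp
  finally show ?thesis .
qed

lemma bias_weight_powr_le:
  fixes l a m :: real
  assumes l: "0 < l" and a: "0 < a" and m: "0 < m" "m \<le> 1/2"
  shows "a\<^sup>2 * l powr (2 * m) \<le> a powr (2 * m) * (l + a)\<^sup>2"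
proof -
  have e: "a powr (2 * m) * a powr (2 - 2 * m) = a\<^sup>2"
    using a by (subst powr_add[symmetric]) simp
  have "a\<^sup>2 * l powr (2 * m) = a powr (2 * m) * (a powr (2 - 2 * m) * l powr (2 * m))"
    unfolding mult.assoc[symmetric] e by simp
  also have "\<dots> \<le> a powr (2 * m) * ((l + a) powr (2 - 2 * m) * (l + a) powr (2 * m))"
    using l a m by (intro mult_left_mono mult_mono powr_mono2) auto
  also have "(l + a) powr (2 - 2 * m) * (l + a) powr (2 * m) = (l + a)\<^sup>2"
    using l a by (subst powr_add[symmetric]) simp
  finally show ?thesis .
qed

lemma simpleL_weight_ge_low: "0 < (l::real) \<Longrightarrow> l \<le> a \<Longrightarrow> l / a\<^sup>2 \<le> 8 * (a * l / (l + a) ^ 3)"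
proof -
  assume l: "0 < l" and la: "l \<le> a"
  have a: "a > 0" using l la by simp
  have "(l + a) ^ 3 \<le> (2 * a) ^ 3" using l la by (intro power_mono) auto
  hence "l * (l + a) ^ 3 \<le> l * (8 * a ^ 3)" using l by (intro mult_left_mono) (auto simp: power_mult_distrib)
  moreover have "l / a\<^sup>2 = (l * (l + a) ^ 3) / (a\<^sup>2 * (l + a) ^ 3)" using l a by simp
  moreover have "8 * (a * l / (l + a) ^ 3) = (l * (8 * a ^ 3)) / (a\<^sup>2 * (l + a) ^ 3)"
    using l a by (simp add: power2_eq_square power3_eq_cube mult_ac)
  ultimately show ?thesis using l a by (simp only:) (rule divide_right_mono, simp_all)
qed

lemma simpleL_weight_ge_high: "0 < (a::real) \<Longrightarrow> a \<le> l \<Longrightarrow> a / l \<le> 8 * (a * l\<^sup>2 / (l + a) ^ 3)"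
proof -
  assume a: "0 < a" and al: "a \<le> l"
  have l: "l > 0" using a al by simp
  have "(l + a) ^ 3 \<le> (2 * l) ^ 3" using a al by (intro power_mono) auto
  hence "a * (l + a) ^ 3 \<le> a * (8 * l ^ 3)" using a by (intro mult_left_mono) (auto simp: power_mult_distrib)
  moreover have "a / l = (a * (l + a) ^ 3) / (l * (l + a) ^ 3)" using l a by simp
  moreover have "8 * (a * l\<^sup>2 / (l + a) ^ 3) = (a * (8 * l ^ 3)) / (l * (l + a) ^ 3)"
    using l a by (simp add: power2_eq_square power3_eq_cube mult_ac)
  ultimately show ?thesis using l a by (simp only:) (rule divide_right_mono, simp_all)
qed

lemma summable_on_if_sq_norm_sums_le:
  fixes f :: "'i \<Rightarrow> 'b::{real_normed_vector,complete_space}" and g :: "'i \<Rightarrow> real"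
  assumes g: "g summable_on A" "\<And>i. i \<in> A \<Longrightarrow> g i \<ge> 0"
    and bound: "\<And>F. finite F \<Longrightarrow> F \<subseteq> A \<Longrightarrow> (norm (sum f F))\<^sup>2 \<le> sum g F"
  shows "f summable_on A"
proof -
  define L where "L = infsum g A"
  \<comment> \<open>As \<open>g \<ge> 0\<close>, \<open>L - sum g F'\<close> bounds \<open>g\<close> on finite sets disjoint from \<open>F'\<close>:
    the partial sums of \<open>f\<close> form a Cauchy net.\<close>
  have tail: "norm (sum f (F - F')) < d"
    if F: "finite F" "F \<subseteq> A" and F': "finite F'" "F' \<subseteq> A" "L - sum g F' < d\<^sup>2" and "d > 0" for F F' d
  proof -
    have "sum g F' + sum g (F - F') = sum g (F \<union> F')"
      using F F' by (metis Un_Diff_cancel2 Un_commute finite_Diff sum.union_disjoint Diff_disjoint)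
    also have "\<dots> = infsum g (F \<union> F')" using F F' by simp
    also have "\<dots> \<le> L"
      unfolding L_def using F F' g by (intro infsum_mono2) auto
    finally have "(norm (sum f (F - F')))\<^sup>2 < d\<^sup>2"
      using bound[of "F - F'"] F F' by force
    thus ?thesis using \<open>d > 0\<close> by (simp add: power_less_imp_less_base)
  qed
  have "\<exists>P. eventually P (finite_subsets_at_top A) \<and>
          (\<forall>F F'. P F \<and> P F' \<longrightarrow> dist (sum f F) (sum f F') < e)" if "e > 0" for e
  proof -
    define P where "P F \<longleftrightarrow> finite F \<and> F \<subseteq> A \<and> L - sum g F < (e/2)\<^sup>2" for F
    have "(sum g \<longlongrightarrow> L) (finite_subsets_at_top A)"
      using g(1) unfolding L_def by (simp add: has_sum_def[symmetric])
    hence "eventually P (finite_subsets_at_top A)"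
      using \<open>e > 0\<close> unfolding P_def
      by (auto simp: eventually_conj_iff eventually_finite_subsets_at_top_weakI dist_real_def
               dest!: tendstoD[where e="(e/2)\<^sup>2"] elim!: eventually_mono)
    moreover have "dist (sum f F1) (sum f F2) < e" if "P F1" "P F2" for F1 F2
    proof -
      have "sum f F1 - sum f F2 = sum f (F1 - F2) - sum f (F2 - F1)"
        using that sum.Int_Diff[of F1 f F2] sum.Int_Diff[of F2 f F1] by (simp add: P_def Int_commute)
      hence "dist (sum f F1) (sum f F2) \<le> norm (sum f (F1 - F2)) + norm (sum f (F2 - F1))"
        by (simp add: dist_norm norm_triangle_ineq4)
      also have "\<dots> < e/2 + e/2"
        using that \<open>e > 0\<close> unfolding P_def by (intro add_strict_mono tail) auto
      finally show ?thesis by simp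
    qed
    ultimately show ?thesis by blast
  qed
  then have "cauchy_filter (filtermap (sum f) (finite_subsets_at_top A))"
    by (simp add: cauchy_filter_metric_filtermap)
  moreover have "complete (UNIV::'b set)"
    by (meson Cauchy_convergent UNIV_I complete_def convergent_def)
  ultimately obtain L' where "(sum f \<longlongrightarrow> L') (finite_subsets_at_top A)"
    using complete_uniform[where S=UNIV] by (force simp add: filterlim_def)
  then show ?thesis
    using summable_on_def has_sum_def by blast
qed

lemma has_sum_diff:
  fixes f g :: "'a \<Rightarrow> 'b::topological_ab_group_add"
  assumes "(f has_sum a) A" "(g has_sum b) A"
  shows "((\<lambda>x. f x - g x) has_sum (a - b)) A"
proof -
  have "((\<lambda>x. - g x) has_sum (- b)) A" using assms(2) by (simp add: has_sum_uminus)
  from has_sum_add[OF assms(1) this] show ?thesis by simp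
qed

lemma has_sum_indicator_single:
  assumes "j \<in> I"
  shows "((\<lambda>i. if i = j then a else 0) has_sum (a::'b::{comm_monoid_add,topological_space})) I"
proof -
  have "((\<lambda>i. if i = j then a else 0) has_sum a) {j}"
    by (rule has_sum_finiteI) auto
  thus ?thesis
    using has_sum_cong_neutral[of I "{j}" "\<lambda>i. if i = j then a else 0"] assms by auto
qed

lemma infsum_le_cmult:
  fixes f g :: "'a \<Rightarrow> real"
  assumes g: "g summable_on A" and f: "\<And>i. i \<in> A \<Longrightarrow> 0 \<le> f i" "\<And>i. i \<in> A \<Longrightarrow> f i \<le> c * g i"
  shows "infsum f A \<le> c * infsum g A"
proof -
  have cg: "(\<lambda>i. c * g i) summable_on A" using g by (rule summable_on_cmult_right)
  have "infsum f A \<le> infsum (\<lambda>i. c * g i) A"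
    using f by (intro infsum_mono cg summable_on_comparison_test[OF cg]) auto
  thus ?thesis by (simp add: infsum_cmult_right')
qed

lemma term_le_infsum:
  fixes f :: "'a \<Rightarrow> real"
  assumes "f summable_on A" "\<And>i. i \<in> A \<Longrightarrow> 0 \<le> f i" "j \<in> A"
  shows "f j \<le> infsum f A"
  using infsum_mono2[of f "{j}" A] assms by auto

lemma infsum_Collect_eq_if:
  fixes f :: "'a \<Rightarrow> 'b::{comm_monoid_add,t2_space}"
  shows "infsum f {i\<in>I. P i} = infsum (\<lambda>i. if P i then f i else 0) I"
  by (rule infsum_cong_neutral) auto

lemma infsum_weighted_sq_add_le:
  fixes c p q :: "'a \<Rightarrow> real"
  assumes p: "(\<lambda>i. c i * (p i)\<^sup>2) summable_on A" and q: "(\<lambda>i. c i * (q i)\<^sup>2) summable_on A"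
    and c: "\<And>i. i \<in> A \<Longrightarrow> 0 \<le> c i"
  shows "(\<Sum>\<^sub>\<infinity>i\<in>A. c i * (p i + q i)\<^sup>2)
           \<le> 2 * (\<Sum>\<^sub>\<infinity>i\<in>A. c i * (p i)\<^sup>2) + 2 * (\<Sum>\<^sub>\<infinity>i\<in>A. c i * (q i)\<^sup>2)"
proof -
  have s: "(\<lambda>i. 2 * (c i * (p i)\<^sup>2) + 2 * (c i * (q i)\<^sup>2)) summable_on A"
    by (intro summable_on_add summable_on_cmult_right p q)
  have "c i * (p i + q i)\<^sup>2 \<le> 2 * (c i * (p i)\<^sup>2) + 2 * (c i * (q i)\<^sup>2)" if "i \<in> A" for i
    using mult_left_mono[OF sq_add_le c[OF that]] by (simp add: algebra_simps)
  hence "(\<Sum>\<^sub>\<infinity>i\<in>A. c i * (p i + q i)\<^sup>2) \<le> (\<Sum>\<^sub>\<infinity>i\<in>A. 2 * (c i * (p i)\<^sup>2) + 2 * (c i * (q i)\<^sup>2))"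
    using c by (intro infsum_mono s summable_on_comparison_test[OF s]) auto
  also have "\<dots> = 2 * (\<Sum>\<^sub>\<infinity>i\<in>A. c i * (p i)\<^sup>2) + 2 * (\<Sum>\<^sub>\<infinity>i\<in>A. c i * (q i)\<^sup>2)"
    by (simp add: infsum_add summable_on_cmult_right p q infsum_cmult_right')
  finally show ?thesis .
qed

section \<open>Orthonormal systems\<close>

lemma orthonormal_on_norm_sum_sq:
  fixes u :: "nat \<Rightarrow> 'a::real_inner"
  assumes on: "orthonormal_on I u" and G: "finite G" "G \<subseteq> I"
  shows "(norm (\<Sum>i\<in>G. c i *\<^sub>R u i))\<^sup>2 = (\<Sum>i\<in>G. (c i)\<^sup>2)"
proof -
  have "(norm (\<Sum>i\<in>G. c i *\<^sub>R u i))\<^sup>2 = (\<Sum>j\<in>G. c j * (\<Sum>i\<in>G. c i * inner (u i) (u j)))"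
    by (simp add: power2_norm_eq_inner inner_sum_left inner_sum_right)
  also have "\<dots> = (\<Sum>j\<in>G. c j * (\<Sum>i\<in>G. if i = j then c i else 0))"
    using on G unfolding orthonormal_on_def
    by (intro sum.cong refl) (auto simp: subset_iff if_distrib[of "(*) _"] cong: if_cong)
  also have "\<dots> = (\<Sum>i\<in>G. (c i)\<^sup>2)"
    using G by (simp add: power2_eq_square)
  finally show ?thesis .
qed

lemma bessel_inequality:
  fixes u :: "nat \<Rightarrow> 'a::real_inner"
  assumes on: "orthonormal_on I u"
  shows "(\<lambda>i. (inner y (u i))\<^sup>2) summable_on I" and "(\<Sum>\<^sub>\<infinity>i\<in>I. (inner y (u i))\<^sup>2) \<le> (norm y)\<^sup>2"
proof -
  have finite_sums: "(\<Sum>i\<in>G. (inner y (u i))\<^sup>2) \<le> (norm y)\<^sup>2" if "finite G" "G \<subseteq> I" for G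
  proof -
    define p where "p = (\<Sum>i\<in>G. inner y (u i) *\<^sub>R u i)"
    have "inner y p = (\<Sum>i\<in>G. (inner y (u i))\<^sup>2)"
      by (simp add: p_def inner_sum_right power2_eq_square)
    moreover have "inner p p = (\<Sum>i\<in>G. (inner y (u i))\<^sup>2)"
      using orthonormal_on_norm_sum_sq[OF on that] by (simp add: p_def power2_norm_eq_inner)
    moreover have "0 \<le> inner (y - p) (y - p)" by simp
    moreover have "inner (y - p) (y - p) = inner y y - 2 * inner y p + inner p p"
      by (simp add: inner_diff_left inner_diff_right inner_commute)
    ultimately show ?thesis by (simp add: power2_norm_eq_inner)
  qed
  show summable: "(\<lambda>i. (inner y (u i))\<^sup>2) summable_on I"
    using finite_sums by (intro nonneg_bdd_above_summable_on) (auto simp: bdd_above_def)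
  show "(\<Sum>\<^sub>\<infinity>i\<in>I. (inner y (u i))\<^sup>2) \<le> (norm y)\<^sup>2"
    by (rule infsum_le_finite_sums[OF summable finite_sums])
qed

context
  fixes I :: "nat set" and u :: "nat \<Rightarrow> 'a::{real_inner,complete_space}"
  assumes on: "orthonormal_on I u"
begin

lemma orthonormal_series_summable:
  assumes "(\<lambda>i. (c i)\<^sup>2) summable_on I"
  shows "(\<lambda>i. c i *\<^sub>R u i) summable_on I"
proof (rule summable_on_if_sq_norm_sums_le[OF assms])
  show "(norm (\<Sum>i\<in>G. c i *\<^sub>R u i))\<^sup>2 \<le> (\<Sum>i\<in>G. (c i)\<^sup>2)" if "finite G" "G \<subseteq> I" for G
    using orthonormal_on_norm_sum_sq[OF on that] by simp
qed simp

lemma orthonormal_series_inner_has_sum: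
  assumes "(\<lambda>i. (c i)\<^sup>2) summable_on I"
  shows "((\<lambda>i. c i * inner (u i) z) has_sum inner (\<Sum>\<^sub>\<infinity>i\<in>I. c i *\<^sub>R u i) z) I"
  using has_sum_bounded_linear[OF bounded_linear_inner_left
          has_sum_infsum[OF orthonormal_series_summable[OF assms]], of z]
  by simp

lemma orthonormal_series_coeff:
  assumes c: "(\<lambda>i. (c i)\<^sup>2) summable_on I" and j: "j \<in> I"
  shows "inner (\<Sum>\<^sub>\<infinity>i\<in>I. c i *\<^sub>R u i) (u j) = c j"
proof -
  have "((\<lambda>i. c i * inner (u i) (u j)) has_sum c j) I"
    using has_sum_indicator_single[OF j, of "c j"] on j
    by (subst has_sum_cong[where g="\<lambda>i. if i = j then c j else 0"]) (auto simp: orthonormal_on_def)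
  with orthonormal_series_inner_has_sum[OF c] show ?thesis
    using has_sum_unique by blast
qed

lemma orthonormal_series_norm_sq:
  assumes c: "(\<lambda>i. (c i)\<^sup>2) summable_on I"
  shows "(norm (\<Sum>\<^sub>\<infinity>i\<in>I. c i *\<^sub>R u i))\<^sup>2 = (\<Sum>\<^sub>\<infinity>i\<in>I. (c i)\<^sup>2)"
proof -
  define s where "s = (\<Sum>\<^sub>\<infinity>i\<in>I. c i *\<^sub>R u i)"
  have "((\<lambda>i. c i * inner (u i) s) has_sum inner s s) I"
    unfolding s_def by (rule orthonormal_series_inner_has_sum[OF c])
  moreover have "c i * inner (u i) s = (c i)\<^sup>2" if "i \<in> I" for i
    using orthonormal_series_coeff[OF c that] by (simp add: s_def inner_commute power2_eq_square)
  ultimately have "((\<lambda>i. (c i)\<^sup>2) has_sum inner s s) I"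
    by (subst (asm) has_sum_cong) auto
  thus ?thesis by (simp add: s_def power2_norm_eq_inner infsumI)
qed

lemma orthonormal_series_diff:
  assumes "(\<lambda>i. (c i)\<^sup>2) summable_on I" and "(\<lambda>i. (d i)\<^sup>2) summable_on I"
  shows "(\<Sum>\<^sub>\<infinity>i\<in>I. c i *\<^sub>R u i) - (\<Sum>\<^sub>\<infinity>i\<in>I. d i *\<^sub>R u i) = (\<Sum>\<^sub>\<infinity>i\<in>I. (c i - d i) *\<^sub>R u i)"
  using has_sum_diff[OF has_sum_infsum has_sum_infsum, OF orthonormal_series_summable
          orthonormal_series_summable, OF assms]
  by (simp add: scaleR_diff_left infsumI)

end

section \<open>Tikhonov regularization in a singular system\<close>

locale compact_singular_system =
  fixes A :: "'a::{real_inner,complete_space} \<Rightarrow> 'b::{real_inner,complete_space}"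
    and I :: "nat set" and \<sigma> :: "nat \<Rightarrow> real" and u :: "nat \<Rightarrow> 'a" and v :: "nat \<Rightarrow> 'b"
  assumes compact: "compact_op A" and system: "singular_system A I \<sigma> u v"
begin

lemma bounded_linear_A: "bounded_linear A"
  using compact by (simp add: compact_op_def)

lemma orthonormal_u: "orthonormal_on I u" and orthonormal_v: "orthonormal_on I v"
  and sigma_pos: "\<And>i. i \<in> I \<Longrightarrow> \<sigma> i > 0"
  and A_has_sum: "\<And>x. ((\<lambda>i. (\<sigma> i * inner x (u i)) *\<^sub>R v i) has_sum A x) I"
  using system by (auto simp: singular_system_def)

lemma inner_A_v: "j \<in> I \<Longrightarrow> inner (A x) (v j) = \<sigma> j * inner x (u j)"
proof -
  assume j: "j \<in> I"
  have "((\<lambda>i. inner ((\<sigma> i * inner x (u i)) *\<^sub>R v i) (v j)) has_sum inner (A x) (v j)) I"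
    by (rule has_sum_bounded_linear[OF bounded_linear_inner_left A_has_sum])
  moreover have "((\<lambda>i. inner ((\<sigma> i * inner x (u i)) *\<^sub>R v i) (v j)) has_sum \<sigma> j * inner x (u j)) I"
    using has_sum_indicator_single[OF j, of "\<sigma> j * inner x (u j)"] orthonormal_v j
    by (subst has_sum_cong[where g="\<lambda>i. if i = j then \<sigma> j * inner x (u j) else 0"])
       (auto simp: orthonormal_on_def)
  ultimately show ?thesis using has_sum_unique by blast
qed

lemma inner_A_has_sum: "((\<lambda>i. \<sigma> i * inner z (u i) * inner y (v i)) has_sum inner y (A z)) I"
  using has_sum_bounded_linear[OF bounded_linear_inner_right A_has_sum, of y z] by simp

lemma A_u: "i \<in> I \<Longrightarrow> A (u i) = \<sigma> i *\<^sub>R v i"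
proof -
  assume i: "i \<in> I"
  have "((\<lambda>j. (\<sigma> j * inner (u i) (u j)) *\<^sub>R v j) has_sum \<sigma> i *\<^sub>R v i) I"
    using has_sum_indicator_single[OF i, of "\<sigma> i *\<^sub>R v i"] orthonormal_u i
    by (subst has_sum_cong[where g="\<lambda>j. if j = i then \<sigma> i *\<^sub>R v i else 0"])
       (auto simp: orthonormal_on_def)
  thus ?thesis using A_has_sum[of "u i"] has_sum_unique by blast
qed

lemma singular_values_bounded: "\<exists>\<Lambda>. \<forall>i\<in>I. (\<sigma> i)\<^sup>2 \<le> \<Lambda>"
proof -
  obtain K where K: "\<And>x. norm (A x) \<le> norm x * K"
    using bounded_linear.pos_bounded[OF bounded_linear_A] by blast
  have "\<sigma> i \<le> K" if i: "i \<in> I" for i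
  proof -
    have "norm (u i) = 1" and "norm (v i) = 1"
      using orthonormal_u orthonormal_v i by (auto simp: orthonormal_on_def norm_eq_sqrt_inner)
    thus ?thesis using K[of "u i"] A_u[OF i] sigma_pos[OF i] by simp
  qed
  hence "(\<sigma> i)\<^sup>2 \<le> K\<^sup>2" if "i \<in> I" for i
    using sigma_pos[OF that] that by (intro power_mono) auto
  thus ?thesis by blast
qed

definition tikh_coeff :: "real \<Rightarrow> 'b \<Rightarrow> nat \<Rightarrow> real" where
  "tikh_coeff \<alpha> y i = \<sigma> i * inner y (v i) / ((\<sigma> i)\<^sup>2 + \<alpha>)"

lemma tikh_coeff_sq_summable:
  assumes "\<alpha> > 0"
  shows "(\<lambda>i. (tikh_coeff \<alpha> y i)\<^sup>2) summable_on I"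
proof (rule summable_on_comparison_test)
  show "(\<lambda>i. 1 / (4 * \<alpha>) * (inner y (v i))\<^sup>2) summable_on I"
    by (intro summable_on_cmult_right bessel_inequality(1) orthonormal_v)
  show "(tikh_coeff \<alpha> y i)\<^sup>2 \<le> 1 / (4 * \<alpha>) * (inner y (v i))\<^sup>2" if "i \<in> I" for i
  proof -
    have "(tikh_coeff \<alpha> y i)\<^sup>2 = (\<sigma> i)\<^sup>2 / ((\<sigma> i)\<^sup>2 + \<alpha>)\<^sup>2 * (inner y (v i))\<^sup>2"
      by (simp add: tikh_coeff_def power_divide power_mult_distrib)
    also have "\<dots> \<le> 1 / (4 * \<alpha>) * (inner y (v i))\<^sup>2"
      using sigma_pos[OF that] assms by (intro mult_right_mono tikh_weight_le) auto
    finally show ?thesis .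
  qed
qed simp

lemma tikh_series_normal_equation:
  fixes y :: 'b
  assumes a: "\<alpha> > 0"
  defines "x \<equiv> \<Sum>\<^sub>\<infinity>i\<in>I. tikh_coeff \<alpha> y i *\<^sub>R u i"
  shows "inner (A x - y) (A z) + \<alpha> * inner x z = 0"
proof -
  note summable = tikh_coeff_sq_summable[OF a, of y]
  have "((\<lambda>i. \<sigma> i * inner z (u i) * inner (A x) (v i) - \<sigma> i * inner z (u i) * inner y (v i)
            + \<alpha> * (tikh_coeff \<alpha> y i * inner (u i) z))
         has_sum inner (A x) (A z) - inner y (A z) + \<alpha> * inner x z) I"
    unfolding x_def
    by (intro has_sum_add has_sum_diff inner_A_has_sum has_sum_cmult_right
              orthonormal_series_inner_has_sum[OF orthonormal_u summable])
  moreover have "\<sigma> i * inner z (u i) * inner (A x) (v i) - \<sigma> i * inner z (u i) * inner y (v i)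
            + \<alpha> * (tikh_coeff \<alpha> y i * inner (u i) z) = 0" if i: "i \<in> I" for i
  proof -
    have Ax: "inner (A x) (v i) = \<sigma> i * tikh_coeff \<alpha> y i"
      using inner_A_v[OF i] orthonormal_series_coeff[OF orthonormal_u summable i] by (simp add: x_def)
    have "tikh_coeff \<alpha> y i * ((\<sigma> i)\<^sup>2 + \<alpha>) = \<sigma> i * inner y (v i)"
      using add_nonneg_pos[OF zero_le_power2 a, of "\<sigma> i"] by (simp add: tikh_coeff_def)
    moreover have "\<sigma> i * inner z (u i) * inner (A x) (v i) - \<sigma> i * inner z (u i) * inner y (v i)
            + \<alpha> * (tikh_coeff \<alpha> y i * inner (u i) z)
        = inner z (u i) * (tikh_coeff \<alpha> y i * ((\<sigma> i)\<^sup>2 + \<alpha>) - \<sigma> i * inner y (v i))"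
      unfolding Ax by (simp add: inner_commute algebra_simps power2_eq_square)
    ultimately show ?thesis by simp
  qed
  ultimately have "((\<lambda>i. 0) has_sum inner (A x) (A z) - inner y (A z) + \<alpha> * inner x z) I"
    by (subst (asm) has_sum_cong) auto
  hence "inner (A x) (A z) - inner y (A z) + \<alpha> * inner x z = 0"
    using has_sum_unique[OF _ has_sum_0_simp] by blast
  thus ?thesis by (simp add: inner_diff_left)
qed

lemma normal_equation_unique:
  assumes a: "\<alpha> > 0"
    and x: "\<And>z. inner (A x - y) (A z) + \<alpha> * inner x z = 0"
    and x': "\<And>z. inner (A x' - y) (A z) + \<alpha> * inner x' z = 0"
  shows "x' = x"
proof -
  define d where "d = x' - x"
  have "A x' - y - (A x - y) = A d"
    using linear_diff[OF bounded_linear.linear[OF bounded_linear_A]] by (simp add: d_def)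
  hence "inner (A d) (A d) + \<alpha> * inner d d = 0"
    using x[of d] x'[of d] by (simp add: d_def inner_diff_left algebra_simps)
  moreover have "inner (A d) (A d) \<ge> 0" "inner d d \<ge> 0" by auto
  ultimately have "\<alpha> * inner d d = 0"
    using a by (metis add_nonneg_eq_0_iff mult_nonneg_nonneg less_imp_le)
  thus ?thesis using a by (simp add: d_def)
qed

lemma tikh_eq_series:
  assumes "\<alpha> > 0"
  shows "tikh A \<alpha> y = (\<Sum>\<^sub>\<infinity>i\<in>I. tikh_coeff \<alpha> y i *\<^sub>R u i)"
  unfolding tikh_def
  using tikh_series_normal_equation[OF assms] normal_equation_unique[OF assms]
  by (intro the_equality) blast+

lemma norm_tikh_sq:
  assumes "\<alpha> > 0"
  shows "(norm (tikh A \<alpha> y))\<^sup>2 = (\<Sum>\<^sub>\<infinity>i\<in>I. (\<sigma> i)\<^sup>2 / ((\<sigma> i)\<^sup>2 + \<alpha>)\<^sup>2 * (inner y (v i))\<^sup>2)"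
  unfolding tikh_eq_series[OF assms] orthonormal_series_norm_sq[OF orthonormal_u tikh_coeff_sq_summable[OF assms]]
  by (simp add: tikh_coeff_def power_divide power_mult_distrib)

lemma norm_tikh_diff_sq:
  assumes a: "\<alpha> > 0" and c: "(\<lambda>i. (c i)\<^sup>2) summable_on I"
  shows "(norm (tikh A \<alpha> y - (\<Sum>\<^sub>\<infinity>i\<in>I. c i *\<^sub>R u i)))\<^sup>2 = (\<Sum>\<^sub>\<infinity>i\<in>I. (tikh_coeff \<alpha> y i - c i)\<^sup>2)"
proof -
  have "(\<lambda>i. (tikh_coeff \<alpha> y i - c i)\<^sup>2) summable_on I"
  proof (rule summable_on_comparison_test)
    show "(\<lambda>i. 2 * (tikh_coeff \<alpha> y i)\<^sup>2 + 2 * (c i)\<^sup>2) summable_on I"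
      by (intro summable_on_add summable_on_cmult_right tikh_coeff_sq_summable a c)
  qed (simp_all add: sq_diff_le)
  thus ?thesis
    unfolding tikh_eq_series[OF a]
    by (simp add: orthonormal_series_diff[OF orthonormal_u tikh_coeff_sq_summable[OF a] c]
                  orthonormal_series_norm_sq[OF orthonormal_u])
qed

end

section \<open>Estimates in the coordinates of the singular system\<close>

text \<open>The estimates are carried out in the coordinates of the singular system:
  \<open>w i = \<langle>\<omega>, u\<^sub>i\<rangle>\<close>, \<open>x i = \<langle>x\<^sup>\<dagger>, u\<^sub>i\<rangle>\<close>, \<open>e i = \<langle>e, v\<^sub>i\<rangle>\<close> and \<open>y e i = \<langle>y\<^sub>\<delta>, v\<^sub>i\<rangle>\<close>;
  \<open>\<Lambda>\<close> bounds the spectrum and \<open>w i0 \<noteq> 0\<close> encodes \<open>x\<^sup>\<dagger> \<noteq> 0\<close>.\<close>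

locale tikhonov_coefficients =
  fixes I :: "nat set" and \<sigma> w :: "nat \<Rightarrow> real" and \<mu> \<Lambda> \<alpha>max C2 :: real and i0 :: nat
  assumes sigma_pos: "\<And>i. i \<in> I \<Longrightarrow> \<sigma> i > 0"
    and sigma_sq_le: "\<And>i. i \<in> I \<Longrightarrow> (\<sigma> i)\<^sup>2 \<le> \<Lambda>"
    and alpha_max_pos: "\<alpha>max > 0"
    and mu_pos: "0 < \<mu>"
    and w_sq_summable: "(\<lambda>i. (w i)\<^sup>2) summable_on I"
    and i0: "i0 \<in> I" "w i0 \<noteq> 0"
begin

definition x :: "nat \<Rightarrow> real" where "x i = ((\<sigma> i)\<^sup>2) powr \<mu> * w i"
definition m :: real where "m = min \<mu> (1/2)"
definition y :: "(nat \<Rightarrow> real) \<Rightarrow> nat \<Rightarrow> real" where "y e i = \<sigma> i * x i + e i"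

text \<open>\<open>psi2 e \<alpha> = \<psi>\<^sub>S\<^sub>L(\<alpha>)\<^sup>2\<close>, \<open>sol2 e \<alpha> = \<parallel>x\<^sub>\<alpha>\<^sup>\<delta>\<parallel>\<^sup>2\<close>, \<open>err2 e \<alpha> = \<parallel>x\<^sub>\<alpha>\<^sup>\<delta> - x\<^sup>\<dagger>\<parallel>\<^sup>2\<close>;
  \<open>psi2_exact\<close> and \<open>psi2_noise\<close> are \<open>\<psi>\<^sub>S\<^sub>L\<^sup>2\<close> evaluated at the exact data \<open>A x\<^sup>\<dagger>\<close> and at \<open>e\<close>,
  \<open>noise2 e \<alpha> = \<parallel>x\<^sub>\<alpha>\<^sup>\<delta> - x\<^sub>\<alpha>\<parallel>\<^sup>2\<close> and \<open>bias2 \<alpha> = \<parallel>x\<^sub>\<alpha> - x\<^sup>\<dagger>\<parallel>\<^sup>2\<close>.\<close>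

definition psi2 :: "(nat \<Rightarrow> real) \<Rightarrow> real \<Rightarrow> real" where
  "psi2 e \<alpha> = (\<Sum>\<^sub>\<infinity>i\<in>I. \<alpha> * (\<sigma> i)\<^sup>2 / ((\<sigma> i)\<^sup>2 + \<alpha>) ^ 3 * (y e i)\<^sup>2)"
definition sol2 :: "(nat \<Rightarrow> real) \<Rightarrow> real \<Rightarrow> real" where
  "sol2 e \<alpha> = (\<Sum>\<^sub>\<infinity>i\<in>I. (\<sigma> i)\<^sup>2 / ((\<sigma> i)\<^sup>2 + \<alpha>)\<^sup>2 * (y e i)\<^sup>2)"
definition err2 :: "(nat \<Rightarrow> real) \<Rightarrow> real \<Rightarrow> real" where
  "err2 e \<alpha> = (\<Sum>\<^sub>\<infinity>i\<in>I. (\<sigma> i * y e i / ((\<sigma> i)\<^sup>2 + \<alpha>) - x i)\<^sup>2)"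
definition psi2_exact :: "real \<Rightarrow> real" where
  "psi2_exact \<alpha> = (\<Sum>\<^sub>\<infinity>i\<in>I. \<alpha> * (\<sigma> i)\<^sup>2 / ((\<sigma> i)\<^sup>2 + \<alpha>) ^ 3 * (\<sigma> i * x i)\<^sup>2)"
definition psi2_noise :: "(nat \<Rightarrow> real) \<Rightarrow> real \<Rightarrow> real" where
  "psi2_noise e \<alpha> = (\<Sum>\<^sub>\<infinity>i\<in>I. \<alpha> * (\<sigma> i)\<^sup>2 / ((\<sigma> i)\<^sup>2 + \<alpha>) ^ 3 * (e i)\<^sup>2)"
definition noise2 :: "(nat \<Rightarrow> real) \<Rightarrow> real \<Rightarrow> real" where
  "noise2 e \<alpha> = (\<Sum>\<^sub>\<infinity>i\<in>I. (\<sigma> i)\<^sup>2 / ((\<sigma> i)\<^sup>2 + \<alpha>)\<^sup>2 * (e i)\<^sup>2)"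
definition bias2 :: "real \<Rightarrow> real" where
  "bias2 \<alpha> = (\<Sum>\<^sub>\<infinity>i\<in>I. \<alpha>\<^sup>2 / ((\<sigma> i)\<^sup>2 + \<alpha>)\<^sup>2 * (x i)\<^sup>2)"
definition xnorm2 :: real where
  "xnorm2 = (\<Sum>\<^sub>\<infinity>i\<in>I. (x i)\<^sup>2)"
definition source_const :: real where
  "source_const = \<Lambda> powr (2 * \<mu> - 2 * m) * (\<Sum>\<^sub>\<infinity>i\<in>I. (w i)\<^sup>2)"

definition noise_level :: "real \<Rightarrow> (nat \<Rightarrow> real) \<Rightarrow> bool" where
  "noise_level \<delta> e \<longleftrightarrow> (\<lambda>i. (e i)\<^sup>2) summable_on I \<and> (\<Sum>\<^sub>\<infinity>i\<in>I. (e i)\<^sup>2) \<le> \<delta>\<^sup>2"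
definition mc2 :: "(nat \<Rightarrow> real) \<Rightarrow> real \<Rightarrow> bool" where
  "mc2 e \<alpha> \<longleftrightarrow> (\<Sum>\<^sub>\<infinity>i\<in>{i\<in>I. (\<sigma> i)\<^sup>2 \<ge> \<alpha>}. \<alpha> / (\<sigma> i)\<^sup>2 * (e i)\<^sup>2)
                  \<le> C2 * (\<Sum>\<^sub>\<infinity>i\<in>{i\<in>I. (\<sigma> i)\<^sup>2 \<le> \<alpha>}. (\<sigma> i)\<^sup>2 / \<alpha> * (e i)\<^sup>2)"
definition source_balance :: "real \<Rightarrow> real \<Rightarrow> bool" where
  "source_balance D \<alpha> \<longleftrightarrow> (\<Sum>\<^sub>\<infinity>i\<in>{i\<in>I. (\<sigma> i)\<^sup>2 \<le> \<alpha>}. (x i)\<^sup>2)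
                  \<le> D * (\<Sum>\<^sub>\<infinity>i\<in>{i\<in>I. (\<sigma> i)\<^sup>2 \<ge> \<alpha>}. \<alpha> / (\<sigma> i)\<^sup>2 * (x i)\<^sup>2)"
definition admissible :: "real \<Rightarrow> (nat \<Rightarrow> real) \<Rightarrow> real \<Rightarrow> bool" where
  "admissible \<delta> e a \<longleftrightarrow> 0 < \<delta> \<and> noise_level \<delta> e \<and> (\<forall>\<alpha>. 0 < \<alpha> \<and> \<alpha> \<le> \<alpha>max \<longrightarrow> mc2 e \<alpha>) \<and>
     a \<in> {0<..<\<alpha>max} \<and>
     (\<forall>\<alpha>\<in>{0<..<\<alpha>max}. sqrt (psi2 e a) / sqrt (sol2 e a) \<le> sqrt (psi2 e \<alpha>) / sqrt (sol2 e \<alpha>))"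

lemma Lambda_pos: "\<Lambda> > 0"
  using sigma_pos[OF i0(1)] sigma_sq_le[OF i0(1)] by (smt (verit) zero_less_power)

lemma m_pos: "0 < m" and m_le_half: "m \<le> 1/2" and m_le_mu: "m \<le> \<mu>"
  using mu_pos by (auto simp: m_def)

lemma source_const_nonneg: "source_const \<ge> 0"
  by (simp add: source_const_def infsum_nonneg)

lemma xnorm2_nonneg: "xnorm2 \<ge> 0"
  by (simp add: xnorm2_def infsum_nonneg)

lemma x_sq_le: "i \<in> I \<Longrightarrow> (x i)\<^sup>2 \<le> \<Lambda> powr (2 * \<mu>) * (w i)\<^sup>2"
proof -
  assume i: "i \<in> I"
  have "(((\<sigma> i)\<^sup>2) powr \<mu>)\<^sup>2 = ((\<sigma> i)\<^sup>2) powr (\<mu> + \<mu>)"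
    by (subst powr_add) (simp add: power2_eq_square)
  also have "\<dots> = ((\<sigma> i)\<^sup>2) powr (2 * \<mu>)" by simp
  also have "\<dots> \<le> \<Lambda> powr (2 * \<mu>)"
    using sigma_sq_le[OF i] sigma_pos[OF i] mu_pos by (intro powr_mono2) auto
  finally show ?thesis by (simp add: x_def power_mult_distrib mult_right_mono)
qed

lemma sigma_x_sq_le: "i \<in> I \<Longrightarrow> (\<sigma> i * x i)\<^sup>2 \<le> (\<Lambda> * \<Lambda> powr (2 * \<mu>)) * (w i)\<^sup>2"
  using mult_mono[OF sigma_sq_le x_sq_le] Lambda_pos by (simp add: power_mult_distrib mult_ac)

lemma y_sq_le: "i \<in> I \<Longrightarrow> (y e i)\<^sup>2 \<le> (2 * \<Lambda> * \<Lambda> powr (2 * \<mu>)) * (w i)\<^sup>2 + 2 * (e i)\<^sup>2"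
  using sq_add_le[of "\<sigma> i * x i" "e i"] sigma_x_sq_le[of i] unfolding y_def by simp

lemma simpleL_weight_bounds:
  "i \<in> I \<Longrightarrow> 0 < \<alpha> \<Longrightarrow> 0 \<le> \<alpha> * (\<sigma> i)\<^sup>2 / ((\<sigma> i)\<^sup>2 + \<alpha>) ^ 3 \<and> \<alpha> * (\<sigma> i)\<^sup>2 / ((\<sigma> i)\<^sup>2 + \<alpha>) ^ 3 \<le> 1 / (4 * \<alpha>)"
  using simpleL_weight_le[of "(\<sigma> i)\<^sup>2" \<alpha>] sigma_pos[of i] by auto

lemma tikh_weight_bounds:
  "i \<in> I \<Longrightarrow> 0 < \<alpha> \<Longrightarrow> 0 \<le> (\<sigma> i)\<^sup>2 / ((\<sigma> i)\<^sup>2 + \<alpha>)\<^sup>2 \<and> (\<sigma> i)\<^sup>2 / ((\<sigma> i)\<^sup>2 + \<alpha>)\<^sup>2 \<le> 1 / (4 * \<alpha>)"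
  using tikh_weight_le[of "(\<sigma> i)\<^sup>2" \<alpha>] sigma_pos[of i] by auto

lemma bias_weight_bounds:
  "0 < \<alpha> \<Longrightarrow> 0 \<le> \<alpha>\<^sup>2 / ((\<sigma> i)\<^sup>2 + \<alpha>)\<^sup>2 \<and> \<alpha>\<^sup>2 / ((\<sigma> i)\<^sup>2 + \<alpha>)\<^sup>2 \<le> 1"
  by (auto simp: divide_le_eq_1 intro!: power_mono)

lemma x_sq_summable: "(\<lambda>i. (x i)\<^sup>2) summable_on I"
  using x_sq_le w_sq_summable
  by (intro summable_on_comparison_test[OF summable_on_cmult_right[OF w_sq_summable]]) auto

lemma weighted_sq_summable:
  assumes e: "(\<lambda>i. (e i)\<^sup>2) summable_on I"
    and c: "\<And>i. i \<in> I \<Longrightarrow> 0 \<le> c i \<and> c i \<le> k"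
    and q: "\<And>i. i \<in> I \<Longrightarrow> (q i)\<^sup>2 \<le> K * (w i)\<^sup>2 + K' * (e i)\<^sup>2"
  shows "(\<lambda>i. c i * (q i)\<^sup>2) summable_on I"
proof (rule summable_on_comparison_test)
  show "(\<lambda>i. k * (K * (w i)\<^sup>2 + K' * (e i)\<^sup>2)) summable_on I"
    by (intro summable_on_cmult_right summable_on_add w_sq_summable e)
  show "c i * (q i)\<^sup>2 \<le> k * (K * (w i)\<^sup>2 + K' * (e i)\<^sup>2)" if "i \<in> I" for i
    using c[OF that] q[OF that] by (intro mult_mono) auto
qed (use c in simp)

context
  fixes e :: "nat \<Rightarrow> real" and \<alpha> :: real
  assumes e: "(\<lambda>i. (e i)\<^sup>2) summable_on I" and alpha: "0 < \<alpha>"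
begin

lemma summable_psi2: "(\<lambda>i. \<alpha> * (\<sigma> i)\<^sup>2 / ((\<sigma> i)\<^sup>2 + \<alpha>) ^ 3 * (y e i)\<^sup>2) summable_on I"
  by (rule weighted_sq_summable[OF e, where k="1 / (4 * \<alpha>)" and K="2 * \<Lambda> * \<Lambda> powr (2 * \<mu>)" and K'=2])
     (simp_all add: simpleL_weight_bounds alpha y_sq_le)

lemma summable_sol2: "(\<lambda>i. (\<sigma> i)\<^sup>2 / ((\<sigma> i)\<^sup>2 + \<alpha>)\<^sup>2 * (y e i)\<^sup>2) summable_on I"
  by (rule weighted_sq_summable[OF e, where k="1 / (4 * \<alpha>)" and K="2 * \<Lambda> * \<Lambda> powr (2 * \<mu>)" and K'=2])
     (simp_all add: tikh_weight_bounds alpha y_sq_le)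

lemma summable_psi2_exact: "(\<lambda>i. \<alpha> * (\<sigma> i)\<^sup>2 / ((\<sigma> i)\<^sup>2 + \<alpha>) ^ 3 * (\<sigma> i * x i)\<^sup>2) summable_on I"
  by (rule weighted_sq_summable[OF e, where k="1 / (4 * \<alpha>)" and K="\<Lambda> * \<Lambda> powr (2 * \<mu>)" and K'=0])
     (simp_all add: simpleL_weight_bounds alpha sigma_x_sq_le)

lemma summable_psi2_noise: "(\<lambda>i. \<alpha> * (\<sigma> i)\<^sup>2 / ((\<sigma> i)\<^sup>2 + \<alpha>) ^ 3 * (e i)\<^sup>2) summable_on I"
  by (rule weighted_sq_summable[OF e, where k="1 / (4 * \<alpha>)" and K=0 and K'=1])
     (simp_all add: simpleL_weight_bounds alpha)

lemma summable_noise2: "(\<lambda>i. (\<sigma> i)\<^sup>2 / ((\<sigma> i)\<^sup>2 + \<alpha>)\<^sup>2 * (e i)\<^sup>2) summable_on I"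
  by (rule weighted_sq_summable[OF e, where k="1 / (4 * \<alpha>)" and K=0 and K'=1])
     (simp_all add: tikh_weight_bounds alpha)

lemma summable_bias2: "(\<lambda>i. \<alpha>\<^sup>2 / ((\<sigma> i)\<^sup>2 + \<alpha>)\<^sup>2 * (x i)\<^sup>2) summable_on I"
  by (rule weighted_sq_summable[OF e, where k=1 and K="\<Lambda> powr (2 * \<mu>)" and K'=0])
     (simp_all add: bias_weight_bounds alpha x_sq_le)

lemma psi2_le: "psi2 e \<alpha> \<le> 2 * psi2_exact \<alpha> + 2 * psi2_noise e \<alpha>"
  unfolding psi2_def psi2_exact_def psi2_noise_def y_def
  by (intro infsum_weighted_sq_add_le summable_psi2_exact summable_psi2_noise)
     (simp add: simpleL_weight_bounds alpha)

lemma psi2_exact_le: "psi2_exact \<alpha> \<le> 2 * psi2 e \<alpha> + 2 * psi2_noise e \<alpha>"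
proof -
  have "psi2_exact \<alpha> = (\<Sum>\<^sub>\<infinity>i\<in>I. \<alpha> * (\<sigma> i)\<^sup>2 / ((\<sigma> i)\<^sup>2 + \<alpha>) ^ 3 * (y e i + - e i)\<^sup>2)"
    unfolding psi2_exact_def by (simp add: y_def)
  also have "\<dots> \<le> 2 * psi2 e \<alpha> + 2 * (\<Sum>\<^sub>\<infinity>i\<in>I. \<alpha> * (\<sigma> i)\<^sup>2 / ((\<sigma> i)\<^sup>2 + \<alpha>) ^ 3 * (- e i)\<^sup>2)"
    unfolding psi2_def using summable_psi2_noise
    by (intro infsum_weighted_sq_add_le summable_psi2) (simp_all add: simpleL_weight_bounds alpha)
  finally show ?thesis by (simp add: psi2_noise_def)
qed

lemma psi2_noise_le: "psi2_noise e \<alpha> \<le> 2 * psi2 e \<alpha> + 2 * psi2_exact \<alpha>"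
proof -
  have "psi2_noise e \<alpha> = (\<Sum>\<^sub>\<infinity>i\<in>I. \<alpha> * (\<sigma> i)\<^sup>2 / ((\<sigma> i)\<^sup>2 + \<alpha>) ^ 3 * (y e i + - (\<sigma> i * x i))\<^sup>2)"
    unfolding psi2_noise_def by (simp add: y_def)
  also have "\<dots> \<le> 2 * psi2 e \<alpha> + 2 * (\<Sum>\<^sub>\<infinity>i\<in>I. \<alpha> * (\<sigma> i)\<^sup>2 / ((\<sigma> i)\<^sup>2 + \<alpha>) ^ 3 * (- (\<sigma> i * x i))\<^sup>2)"
    unfolding psi2_def using summable_psi2_exact
    by (intro infsum_weighted_sq_add_le summable_psi2) (simp_all add: simpleL_weight_bounds alpha)
  finally show ?thesis by (simp add: psi2_exact_def)
qed

lemma sol2_le: "sol2 e \<alpha> \<le> 2 * xnorm2 + 2 * noise2 e \<alpha>"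
proof -
  have "sol2 e \<alpha> \<le> 2 * (\<Sum>\<^sub>\<infinity>i\<in>I. (\<sigma> i)\<^sup>2 / ((\<sigma> i)\<^sup>2 + \<alpha>)\<^sup>2 * (\<sigma> i * x i)\<^sup>2) + 2 * noise2 e \<alpha>"
    unfolding sol2_def noise2_def y_def
    by (intro infsum_weighted_sq_add_le summable_noise2
          weighted_sq_summable[OF e, where k="1 / (4 * \<alpha>)" and K="\<Lambda> * \<Lambda> powr (2 * \<mu>)" and K'=0])
       (simp_all add: tikh_weight_bounds alpha sigma_x_sq_le)
  also have "(\<Sum>\<^sub>\<infinity>i\<in>I. (\<sigma> i)\<^sup>2 / ((\<sigma> i)\<^sup>2 + \<alpha>)\<^sup>2 * (\<sigma> i * x i)\<^sup>2) \<le> 1 * xnorm2"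
    unfolding xnorm2_def
  proof (rule infsum_le_cmult)
    show "(\<lambda>i. (x i)\<^sup>2) summable_on I" by (rule x_sq_summable)
    fix i assume i: "i \<in> I"
    have "((\<sigma> i)\<^sup>2)\<^sup>2 \<le> ((\<sigma> i)\<^sup>2 + \<alpha>)\<^sup>2" using alpha by (intro power_mono) auto
    hence "((\<sigma> i)\<^sup>2)\<^sup>2 / ((\<sigma> i)\<^sup>2 + \<alpha>)\<^sup>2 * (x i)\<^sup>2 \<le> 1 * (x i)\<^sup>2"
      using sigma_pos[OF i] alpha by (intro mult_right_mono) (auto simp: divide_le_eq_1)
    thus "(\<sigma> i)\<^sup>2 / ((\<sigma> i)\<^sup>2 + \<alpha>)\<^sup>2 * (\<sigma> i * x i)\<^sup>2 \<le> 1 * (x i)\<^sup>2"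
      by (simp add: power_mult_distrib power2_eq_square mult_ac)
  qed simp
  finally show ?thesis by simp
qed

lemma err2_le: "err2 e \<alpha> \<le> 2 * noise2 e \<alpha> + 2 * bias2 \<alpha>"
proof -
  have "\<sigma> i * y e i / ((\<sigma> i)\<^sup>2 + \<alpha>) - x i
        = \<sigma> i * e i / ((\<sigma> i)\<^sup>2 + \<alpha>) + - (\<alpha> * x i / ((\<sigma> i)\<^sup>2 + \<alpha>))" for i
  proof -
    have ne: "(\<sigma> i)\<^sup>2 + \<alpha> \<noteq> 0" using add_nonneg_pos[OF zero_le_power2 alpha, of "\<sigma> i"] by simp
    have num: "\<sigma> i * y e i - x i * ((\<sigma> i)\<^sup>2 + \<alpha>) = \<sigma> i * e i - \<alpha> * x i"
      by (simp add: y_def power2_eq_square algebra_simps)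
    have "\<sigma> i * y e i / ((\<sigma> i)\<^sup>2 + \<alpha>) - x i = (\<sigma> i * y e i - x i * ((\<sigma> i)\<^sup>2 + \<alpha>)) / ((\<sigma> i)\<^sup>2 + \<alpha>)"
      using ne by (simp add: diff_divide_distrib)
    also have "\<dots> = \<sigma> i * e i / ((\<sigma> i)\<^sup>2 + \<alpha>) - \<alpha> * x i / ((\<sigma> i)\<^sup>2 + \<alpha>)"
      unfolding num by (simp add: diff_divide_distrib)
    finally show ?thesis by simp
  qed
  hence "err2 e \<alpha> = (\<Sum>\<^sub>\<infinity>i\<in>I. 1 * (\<sigma> i * e i / ((\<sigma> i)\<^sup>2 + \<alpha>) + - (\<alpha> * x i / ((\<sigma> i)\<^sup>2 + \<alpha>)))\<^sup>2)"
    by (simp add: err2_def)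
  also have "\<dots> \<le> 2 * (\<Sum>\<^sub>\<infinity>i\<in>I. 1 * (\<sigma> i * e i / ((\<sigma> i)\<^sup>2 + \<alpha>))\<^sup>2)
                 + 2 * (\<Sum>\<^sub>\<infinity>i\<in>I. 1 * (- (\<alpha> * x i / ((\<sigma> i)\<^sup>2 + \<alpha>)))\<^sup>2)"
    using summable_noise2 summable_bias2
    by (intro infsum_weighted_sq_add_le) (simp_all add: power_divide power_mult_distrib)
  finally show ?thesis
    by (simp add: noise2_def bias2_def power_divide power_mult_distrib)
qed

lemma psi2_noise_le_noise_level: "psi2_noise e \<alpha> \<le> 1 / (4 * \<alpha>) * (\<Sum>\<^sub>\<infinity>i\<in>I. (e i)\<^sup>2)"
  unfolding psi2_noise_def
proof (rule infsum_le_cmult[OF e])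
  fix i assume "i \<in> I"
  thus "0 \<le> \<alpha> * (\<sigma> i)\<^sup>2 / ((\<sigma> i)\<^sup>2 + \<alpha>) ^ 3 * (e i)\<^sup>2" and "\<alpha> * (\<sigma> i)\<^sup>2 / ((\<sigma> i)\<^sup>2 + \<alpha>) ^ 3 * (e i)\<^sup>2 \<le> 1 / (4 * \<alpha>) * (e i)\<^sup>2"
    using simpleL_weight_bounds[OF _ alpha] by (auto intro!: mult_right_mono simp del: times_divide_eq_left)
qed

lemma noise2_le_noise_level: "noise2 e \<alpha> \<le> 1 / (4 * \<alpha>) * (\<Sum>\<^sub>\<infinity>i\<in>I. (e i)\<^sup>2)"
  unfolding noise2_def
proof (rule infsum_le_cmult[OF e])
  fix i assume "i \<in> I"
  thus "0 \<le> (\<sigma> i)\<^sup>2 / ((\<sigma> i)\<^sup>2 + \<alpha>)\<^sup>2 * (e i)\<^sup>2" and "(\<sigma> i)\<^sup>2 / ((\<sigma> i)\<^sup>2 + \<alpha>)\<^sup>2 * (e i)\<^sup>2 \<le> 1 / (4 * \<alpha>) * (e i)\<^sup>2"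
    using tikh_weight_bounds[OF _ alpha] by (auto intro!: mult_right_mono simp del: times_divide_eq_left)
qed

lemma psi2_nonneg: "0 \<le> psi2 e \<alpha>" and psi2_exact_nonneg: "0 \<le> psi2_exact \<alpha>"
  unfolding psi2_def psi2_exact_def
  using simpleL_weight_bounds alpha by (auto intro!: infsum_nonneg)

end


lemma psi2_exact_le_powr: assumes alpha: "0 < \<alpha>" shows "psi2_exact \<alpha> \<le> source_const * \<alpha> powr (2 * m)"
proof -
  have "psi2_exact \<alpha> \<le> (\<Lambda> powr (2 * \<mu> - 2 * m) * \<alpha> powr (2 * m)) * (\<Sum>\<^sub>\<infinity>i\<in>I. (w i)\<^sup>2)"
    unfolding psi2_exact_def
  proof (rule infsum_le_cmult[OF w_sq_summable])
    fix i assume i: "i \<in> I"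
    define l where "l = (\<sigma> i)\<^sup>2"
    have l: "0 < l" "l \<le> \<Lambda>" using sigma_pos[OF i] sigma_sq_le[OF i] by (auto simp: l_def)
    have "\<alpha> * l * l * (l powr \<mu>)\<^sup>2 \<le> \<alpha> * l * l * (l powr (2 * m) * \<Lambda> powr (2 * \<mu> - 2 * m))"
      using powr_sq_le_split[OF l m_pos m_le_mu] l alpha by (intro mult_left_mono) auto
    also have "\<dots> = (\<alpha> * l\<^sup>2 * l powr (2 * m)) * \<Lambda> powr (2 * \<mu> - 2 * m)"
      by (simp add: power2_eq_square mult_ac)
    also have "\<dots> \<le> (\<alpha> powr (2 * m) * (l + \<alpha>) ^ 3) * \<Lambda> powr (2 * \<mu> - 2 * m)"
      using simpleL_weight_powr_le[OF l(1) alpha m_pos m_le_half] by (rule mult_right_mono) simp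
    finally have weight: "\<alpha> * l * l * (l powr \<mu>)\<^sup>2 / (l + \<alpha>) ^ 3 \<le> \<Lambda> powr (2 * \<mu> - 2 * m) * \<alpha> powr (2 * m)"
      using l alpha by (simp add: divide_le_eq mult_ac)
    have "\<alpha> * (\<sigma> i)\<^sup>2 / ((\<sigma> i)\<^sup>2 + \<alpha>) ^ 3 * (\<sigma> i * x i)\<^sup>2
        = (\<alpha> * l * l * (l powr \<mu>)\<^sup>2 / (l + \<alpha>) ^ 3) * (w i)\<^sup>2"
      by (simp add: l_def x_def power_mult_distrib)
    thus "\<alpha> * (\<sigma> i)\<^sup>2 / ((\<sigma> i)\<^sup>2 + \<alpha>) ^ 3 * (\<sigma> i * x i)\<^sup>2
        \<le> \<Lambda> powr (2 * \<mu> - 2 * m) * \<alpha> powr (2 * m) * (w i)\<^sup>2"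
      using mult_right_mono[OF weight zero_le_power2] by simp
    show "0 \<le> \<alpha> * (\<sigma> i)\<^sup>2 / ((\<sigma> i)\<^sup>2 + \<alpha>) ^ 3 * (\<sigma> i * x i)\<^sup>2"
      using simpleL_weight_bounds[OF i alpha] by (intro mult_nonneg_nonneg) auto
  qed
  thus ?thesis by (simp add: source_const_def mult_ac)
qed

lemma bias2_le_powr: assumes alpha: "0 < \<alpha>" shows "bias2 \<alpha> \<le> source_const * \<alpha> powr (2 * m)"
proof -
  have "bias2 \<alpha> \<le> (\<Lambda> powr (2 * \<mu> - 2 * m) * \<alpha> powr (2 * m)) * (\<Sum>\<^sub>\<infinity>i\<in>I. (w i)\<^sup>2)"
    unfolding bias2_def
  proof (rule infsum_le_cmult[OF w_sq_summable])
    fix i assume i: "i \<in> I"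
    define l where "l = (\<sigma> i)\<^sup>2"
    have l: "0 < l" "l \<le> \<Lambda>" using sigma_pos[OF i] sigma_sq_le[OF i] by (auto simp: l_def)
    have "\<alpha>\<^sup>2 * (l powr \<mu>)\<^sup>2 \<le> \<alpha>\<^sup>2 * (l powr (2 * m) * \<Lambda> powr (2 * \<mu> - 2 * m))"
      using powr_sq_le_split[OF l m_pos m_le_mu] by (intro mult_left_mono) auto
    also have "\<dots> = (\<alpha>\<^sup>2 * l powr (2 * m)) * \<Lambda> powr (2 * \<mu> - 2 * m)"
      by (simp add: mult_ac)
    also have "\<dots> \<le> (\<alpha> powr (2 * m) * (l + \<alpha>)\<^sup>2) * \<Lambda> powr (2 * \<mu> - 2 * m)"
      using bias_weight_powr_le[OF l(1) alpha m_pos m_le_half] by (rule mult_right_mono) simp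
    finally have weight: "\<alpha>\<^sup>2 * (l powr \<mu>)\<^sup>2 / (l + \<alpha>)\<^sup>2 \<le> \<Lambda> powr (2 * \<mu> - 2 * m) * \<alpha> powr (2 * m)"
      using l alpha by (simp add: divide_le_eq mult_ac)
    have "\<alpha>\<^sup>2 / ((\<sigma> i)\<^sup>2 + \<alpha>)\<^sup>2 * (x i)\<^sup>2 = (\<alpha>\<^sup>2 * (l powr \<mu>)\<^sup>2 / (l + \<alpha>)\<^sup>2) * (w i)\<^sup>2"
      by (simp add: l_def x_def power_mult_distrib)
    thus "\<alpha>\<^sup>2 / ((\<sigma> i)\<^sup>2 + \<alpha>)\<^sup>2 * (x i)\<^sup>2 \<le> \<Lambda> powr (2 * \<mu> - 2 * m) * \<alpha> powr (2 * m) * (w i)\<^sup>2"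
      using mult_right_mono[OF weight zero_le_power2] by simp
  qed simp
  thus ?thesis by (simp add: source_const_def mult_ac)
qed

text \<open>Lower bounds coming from the single nonvanishing coefficient \<open>w i0\<close>.\<close>

definition n0 :: real where "n0 = ((\<sigma> i0)\<^sup>2)\<^sup>2 * (x i0)\<^sup>2 / (4 * ((\<sigma> i0)\<^sup>2 + \<alpha>max)\<^sup>2)"
definition g0 :: real where "g0 = ((\<sigma> i0)\<^sup>2)\<^sup>2 * (x i0)\<^sup>2 / ((\<sigma> i0)\<^sup>2 + \<alpha>max) ^ 3"

lemma x_i0_nonzero: "x i0 \<noteq> 0"
  using i0 sigma_pos[OF i0(1)] by (simp add: x_def)

lemma n0_pos: "n0 > 0" and g0_pos: "g0 > 0"
proof -
  have "(\<sigma> i0)\<^sup>2 + \<alpha>max > 0" using alpha_max_pos by (simp add: add_nonneg_pos)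
  thus "n0 > 0" "g0 > 0" unfolding n0_def g0_def
    using x_i0_nonzero sigma_pos[OF i0(1)] by (auto intro!: divide_pos_pos mult_pos_pos)
qed

lemma n0_le_sol2:
  assumes e: "(\<lambda>i. (e i)\<^sup>2) summable_on I" and alpha: "0 < \<alpha>" "\<alpha> \<le> \<alpha>max"
    and e_i0: "\<bar>e i0\<bar> \<le> \<bar>\<sigma> i0 * x i0\<bar> / 2"
  shows "n0 \<le> sol2 e \<alpha>"
proof -
  define l where "l = (\<sigma> i0)\<^sup>2"
  have l: "l > 0" using sigma_pos[OF i0(1)] by (simp add: l_def)
  have "\<bar>\<sigma> i0 * x i0\<bar> / 2 \<le> \<bar>y e i0\<bar>" using e_i0 unfolding y_def by linarith
  hence "(\<bar>\<sigma> i0 * x i0\<bar> / 2)\<^sup>2 \<le> (y e i0)\<^sup>2" by (metis abs_ge_zero power2_abs power_mono zero_le_divide_iff zero_le_numeral)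
  hence y0: "l * (x i0)\<^sup>2 / 4 \<le> (y e i0)\<^sup>2" by (simp add: l_def power_mult_distrib power_divide)
  have weight: "l / (l + \<alpha>max)\<^sup>2 \<le> l / (l + \<alpha>)\<^sup>2"
    using l alpha by (intro divide_left_mono power_mono mult_pos_pos) auto
  have "n0 = (l / (l + \<alpha>max)\<^sup>2) * (l * (x i0)\<^sup>2 / 4)"
    by (simp add: n0_def l_def power2_eq_square mult_ac)
  also have "\<dots> \<le> (l / (l + \<alpha>)\<^sup>2) * (y e i0)\<^sup>2"
    using weight y0 l by (intro mult_mono) auto
  also have "\<dots> \<le> sol2 e \<alpha>" unfolding sol2_def l_def
    by (rule term_le_infsum[OF summable_sol2[OF e alpha(1)] _ i0(1)]) (use tikh_weight_bounds alpha in auto)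
  finally show ?thesis .
qed

lemma g0_mult_le_psi2_exact:
  assumes alpha: "0 < \<alpha>" "\<alpha> \<le> \<alpha>max"
  shows "g0 * \<alpha> \<le> psi2_exact \<alpha>"
proof -
  define l where "l = (\<sigma> i0)\<^sup>2"
  have l: "l > 0" using sigma_pos[OF i0(1)] by (simp add: l_def)
  have weight: "\<alpha> * l / (l + \<alpha>max) ^ 3 \<le> \<alpha> * l / (l + \<alpha>) ^ 3"
    using l alpha by (intro divide_left_mono power_mono mult_pos_pos) auto
  have "g0 * \<alpha> = (\<alpha> * l / (l + \<alpha>max) ^ 3) * (l * (x i0)\<^sup>2)"
    by (simp add: g0_def l_def power2_eq_square mult_ac)
  also have "\<dots> \<le> (\<alpha> * l / (l + \<alpha>) ^ 3) * (l * (x i0)\<^sup>2)"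
    using weight l by (intro mult_right_mono) auto
  also have "\<dots> = \<alpha> * (\<sigma> i0)\<^sup>2 / ((\<sigma> i0)\<^sup>2 + \<alpha>) ^ 3 * (\<sigma> i0 * x i0)\<^sup>2"
    by (simp add: l_def power_mult_distrib)
  also have "\<dots> \<le> psi2_exact \<alpha>" unfolding psi2_exact_def
    by (rule term_le_infsum[OF summable_psi2_exact[OF _ alpha(1)] _ i0(1)])
       (use simpleL_weight_bounds alpha in \<open>auto intro: summable_on_0\<close>)
  finally show ?thesis .
qed


lemma bias2_le_split:
  assumes alpha: "0 < \<alpha>"
  shows "bias2 \<alpha> \<le> (\<Sum>\<^sub>\<infinity>i\<in>{i\<in>I. (\<sigma> i)\<^sup>2 \<le> \<alpha>}. (x i)\<^sup>2)
                   + (\<Sum>\<^sub>\<infinity>i\<in>{i\<in>I. (\<sigma> i)\<^sup>2 \<ge> \<alpha>}. \<alpha> / (\<sigma> i)\<^sup>2 * (x i)\<^sup>2)"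
proof -
  define low where "low i = (if (\<sigma> i)\<^sup>2 \<le> \<alpha> then (x i)\<^sup>2 else 0)" for i
  define high where "high i = (if (\<sigma> i)\<^sup>2 \<ge> \<alpha> then \<alpha> / (\<sigma> i)\<^sup>2 * (x i)\<^sup>2 else 0)" for i
  have high_bounds: "0 \<le> high i \<and> high i \<le> (x i)\<^sup>2" for i
    using alpha mult_right_mono[of "\<alpha> / (\<sigma> i)\<^sup>2" 1 "(x i)\<^sup>2"] by (auto simp: high_def divide_le_eq_1)
  have low: "low summable_on I" and high: "high summable_on I"
    using x_sq_summable high_bounds
    by (auto simp: low_def intro: summable_on_comparison_test[OF x_sq_summable])
  have "bias2 \<alpha> \<le> infsum (\<lambda>i. low i + high i) I"
    unfolding bias2_def
  proof (intro infsum_mono summable_bias2[of "\<lambda>_. 0", OF _ alpha] summable_on_add low high)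
    fix i assume i: "i \<in> I"
    show "\<alpha>\<^sup>2 / ((\<sigma> i)\<^sup>2 + \<alpha>)\<^sup>2 * (x i)\<^sup>2 \<le> low i + high i"
    proof (cases "(\<sigma> i)\<^sup>2 \<le> \<alpha>")
      case True
      have "\<alpha>\<^sup>2 / ((\<sigma> i)\<^sup>2 + \<alpha>)\<^sup>2 * (x i)\<^sup>2 \<le> 1 * (x i)\<^sup>2"
        using bias_weight_bounds[OF alpha] by (intro mult_right_mono) auto
      thus ?thesis using True high_bounds[of i] by (simp add: low_def)
    next
      case False
      have l: "0 < (\<sigma> i)\<^sup>2" using sigma_pos[OF i] by simp
      have "\<alpha>\<^sup>2 / ((\<sigma> i)\<^sup>2 + \<alpha>)\<^sup>2 \<le> \<alpha>\<^sup>2 / ((\<sigma> i)\<^sup>2)\<^sup>2"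
        using l alpha add_pos_pos[OF l alpha] by (intro divide_left_mono power_mono mult_pos_pos) auto
      also have "\<dots> = (\<alpha> / (\<sigma> i)\<^sup>2) * (\<alpha> / (\<sigma> i)\<^sup>2)" by (simp add: power2_eq_square)
      also have "\<dots> \<le> \<alpha> / (\<sigma> i)\<^sup>2" using False alpha by (intro mult_left_le) (auto simp: divide_le_eq_1)
      finally have "\<alpha>\<^sup>2 / ((\<sigma> i)\<^sup>2 + \<alpha>)\<^sup>2 * (x i)\<^sup>2 \<le> \<alpha> / (\<sigma> i)\<^sup>2 * (x i)\<^sup>2"
        by (intro mult_right_mono) auto
      thus ?thesis using False by (simp add: low_def high_def)
    qed
  qed simp
  also have "\<dots> = infsum low I + infsum high I" by (rule infsum_add[OF low high])
  also have "infsum low I = (\<Sum>\<^sub>\<infinity>i\<in>{i\<in>I. (\<sigma> i)\<^sup>2 \<le> \<alpha>}. (x i)\<^sup>2)"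
    unfolding low_def by (simp only: infsum_Collect_eq_if)
  also have "infsum high I = (\<Sum>\<^sub>\<infinity>i\<in>{i\<in>I. (\<sigma> i)\<^sup>2 \<ge> \<alpha>}. \<alpha> / (\<sigma> i)\<^sup>2 * (x i)\<^sup>2)"
    unfolding high_def by (simp only: infsum_Collect_eq_if)
  finally show ?thesis .
qed

lemma high_part_le_psi2_exact:
  assumes alpha: "0 < \<alpha>"
  shows "(\<Sum>\<^sub>\<infinity>i\<in>{i\<in>I. (\<sigma> i)\<^sup>2 \<ge> \<alpha>}. \<alpha> / (\<sigma> i)\<^sup>2 * (x i)\<^sup>2) \<le> 8 * psi2_exact \<alpha>"
  unfolding infsum_Collect_eq_if psi2_exact_def
proof (rule infsum_le_cmult[OF summable_psi2_exact[OF summable_on_0 alpha]])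
  fix i assume i: "i \<in> I"
  show "0 \<le> (if (\<sigma> i)\<^sup>2 \<ge> \<alpha> then \<alpha> / (\<sigma> i)\<^sup>2 * (x i)\<^sup>2 else 0)"
    using alpha by (simp add: less_imp_le)
  show "(if (\<sigma> i)\<^sup>2 \<ge> \<alpha> then \<alpha> / (\<sigma> i)\<^sup>2 * (x i)\<^sup>2 else 0)
        \<le> 8 * (\<alpha> * (\<sigma> i)\<^sup>2 / ((\<sigma> i)\<^sup>2 + \<alpha>) ^ 3 * (\<sigma> i * x i)\<^sup>2)"
  proof (cases "(\<sigma> i)\<^sup>2 \<ge> \<alpha>")
    case True
    have "\<alpha> / (\<sigma> i)\<^sup>2 * (x i)\<^sup>2 \<le> 8 * (\<alpha> * ((\<sigma> i)\<^sup>2)\<^sup>2 / ((\<sigma> i)\<^sup>2 + \<alpha>) ^ 3) * (x i)\<^sup>2"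
      using True alpha by (intro mult_right_mono simpleL_weight_ge_high) auto
    thus ?thesis using True by (simp add: power_mult_distrib power2_eq_square mult_ac)
  next
    case False
    have "0 \<le> \<alpha> * (\<sigma> i)\<^sup>2 / ((\<sigma> i)\<^sup>2 + \<alpha>) ^ 3 * (\<sigma> i * x i)\<^sup>2"
      using simpleL_weight_bounds[OF i alpha] by (intro mult_nonneg_nonneg) auto
    thus ?thesis using False by simp
  qed
qed simp

lemma bias2_le_psi2_exact:
  assumes alpha: "0 < \<alpha>" and D: "D \<ge> 0" and balance: "source_balance D \<alpha>"
  shows "bias2 \<alpha> \<le> 8 * (D + 1) * psi2_exact \<alpha>"
proof -
  define H where "H = (\<Sum>\<^sub>\<infinity>i\<in>{i\<in>I. (\<sigma> i)\<^sup>2 \<ge> \<alpha>}. \<alpha> / (\<sigma> i)\<^sup>2 * (x i)\<^sup>2)"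
  have "bias2 \<alpha> \<le> D * H + H"
    using bias2_le_split[OF alpha] balance by (simp add: source_balance_def H_def)
  also have "\<dots> = (D + 1) * H" by (simp add: algebra_simps)
  also have "\<dots> \<le> (D + 1) * (8 * psi2_exact \<alpha>)"
    using high_part_le_psi2_exact[OF alpha] D by (intro mult_left_mono) (auto simp: H_def)
  finally show ?thesis by (simp only: mult_ac)
qed

context
  fixes e :: "nat \<Rightarrow> real" and \<alpha> :: real
  assumes e: "(\<lambda>i. (e i)\<^sup>2) summable_on I" and alpha: "0 < \<alpha>"
begin

lemma noise2_le_split:
  "noise2 e \<alpha> \<le> (\<Sum>\<^sub>\<infinity>i\<in>{i\<in>I. (\<sigma> i)\<^sup>2 \<le> \<alpha>}. (\<sigma> i)\<^sup>2 / \<alpha>\<^sup>2 * (e i)\<^sup>2)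
                 + 1 / \<alpha> * (\<Sum>\<^sub>\<infinity>i\<in>{i\<in>I. (\<sigma> i)\<^sup>2 \<ge> \<alpha>}. \<alpha> / (\<sigma> i)\<^sup>2 * (e i)\<^sup>2)"
proof -
  define low where "low i = (if (\<sigma> i)\<^sup>2 \<le> \<alpha> then (\<sigma> i)\<^sup>2 / \<alpha>\<^sup>2 * (e i)\<^sup>2 else 0)" for i
  define high where "high i = (if (\<sigma> i)\<^sup>2 \<ge> \<alpha> then \<alpha> / (\<sigma> i)\<^sup>2 * (e i)\<^sup>2 else 0)" for i
  have low_bounds: "0 \<le> low i \<and> low i \<le> 1 / \<alpha> * (e i)\<^sup>2" for i
  proof (cases "(\<sigma> i)\<^sup>2 \<le> \<alpha>")
    case True
    have "(\<sigma> i)\<^sup>2 / \<alpha>\<^sup>2 \<le> \<alpha> / \<alpha>\<^sup>2" using True alpha by (intro divide_right_mono) auto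
    also have "\<alpha> / \<alpha>\<^sup>2 = 1 / \<alpha>" by (simp add: power2_eq_square)
    finally have "(\<sigma> i)\<^sup>2 / \<alpha>\<^sup>2 * (e i)\<^sup>2 \<le> 1 / \<alpha> * (e i)\<^sup>2" by (intro mult_right_mono) auto
    thus ?thesis using True by (simp add: low_def)
  qed (use alpha in \<open>simp add: low_def\<close>)
  have high_bounds: "0 \<le> high i \<and> high i \<le> (e i)\<^sup>2" for i
    using alpha mult_right_mono[of "\<alpha> / (\<sigma> i)\<^sup>2" 1 "(e i)\<^sup>2"] by (auto simp: high_def divide_le_eq_1)
  have low: "low summable_on I"
    using low_bounds by (intro summable_on_comparison_test[OF summable_on_cmult_right[OF e, of "1 / \<alpha>"]]) auto
  have high: "high summable_on I"
    using high_bounds by (intro summable_on_comparison_test[OF e]) auto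
  have "noise2 e \<alpha> \<le> infsum (\<lambda>i. low i + 1 / \<alpha> * high i) I"
    unfolding noise2_def
  proof (intro infsum_mono summable_noise2[OF e alpha] summable_on_add low summable_on_cmult_right high)
    fix i assume i: "i \<in> I"
    have l: "(\<sigma> i)\<^sup>2 > 0" using sigma_pos[OF i] by simp
    show "(\<sigma> i)\<^sup>2 / ((\<sigma> i)\<^sup>2 + \<alpha>)\<^sup>2 * (e i)\<^sup>2 \<le> low i + 1 / \<alpha> * high i"
    proof (cases "(\<sigma> i)\<^sup>2 \<le> \<alpha>")
      case True
      have "(\<sigma> i)\<^sup>2 / ((\<sigma> i)\<^sup>2 + \<alpha>)\<^sup>2 * (e i)\<^sup>2 \<le> (\<sigma> i)\<^sup>2 / \<alpha>\<^sup>2 * (e i)\<^sup>2"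
        using l alpha add_pos_pos[OF l alpha]
        by (intro mult_right_mono divide_left_mono power_mono mult_pos_pos) auto
      moreover have "0 \<le> 1 / \<alpha> * high i" using high_bounds[of i] alpha by simp
      ultimately show ?thesis using True by (simp add: low_def)
    next
      case False
      have "(\<sigma> i)\<^sup>2 / ((\<sigma> i)\<^sup>2 + \<alpha>)\<^sup>2 \<le> (\<sigma> i)\<^sup>2 / ((\<sigma> i)\<^sup>2)\<^sup>2"
        using l alpha add_pos_pos[OF l alpha] by (intro divide_left_mono power_mono mult_pos_pos) auto
      also have "\<dots> = 1 / \<alpha> * (\<alpha> / (\<sigma> i)\<^sup>2)" using l alpha by (simp add: power2_eq_square)
      finally have "(\<sigma> i)\<^sup>2 / ((\<sigma> i)\<^sup>2 + \<alpha>)\<^sup>2 * (e i)\<^sup>2 \<le> 1 / \<alpha> * (\<alpha> / (\<sigma> i)\<^sup>2) * (e i)\<^sup>2"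
        by (intro mult_right_mono) auto
      thus ?thesis using False alpha by (simp add: low_def high_def)
    qed
  qed
  also have "\<dots> = infsum low I + 1 / \<alpha> * infsum high I"
    by (simp only: infsum_add[OF low summable_on_cmult_right[OF high]] infsum_cmult_right')
  also have "infsum low I = (\<Sum>\<^sub>\<infinity>i\<in>{i\<in>I. (\<sigma> i)\<^sup>2 \<le> \<alpha>}. (\<sigma> i)\<^sup>2 / \<alpha>\<^sup>2 * (e i)\<^sup>2)"
    unfolding low_def by (simp only: infsum_Collect_eq_if)
  also have "infsum high I = (\<Sum>\<^sub>\<infinity>i\<in>{i\<in>I. (\<sigma> i)\<^sup>2 \<ge> \<alpha>}. \<alpha> / (\<sigma> i)\<^sup>2 * (e i)\<^sup>2)"
    unfolding high_def by (simp only: infsum_Collect_eq_if)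
  finally show ?thesis .
qed

lemma low_part_le_psi2_noise:
  "(\<Sum>\<^sub>\<infinity>i\<in>{i\<in>I. (\<sigma> i)\<^sup>2 \<le> \<alpha>}. (\<sigma> i)\<^sup>2 / \<alpha>\<^sup>2 * (e i)\<^sup>2) \<le> 8 * psi2_noise e \<alpha>"
  unfolding infsum_Collect_eq_if psi2_noise_def
proof (rule infsum_le_cmult[OF summable_psi2_noise[OF e alpha]])
  fix i assume i: "i \<in> I"
  show "0 \<le> (if (\<sigma> i)\<^sup>2 \<le> \<alpha> then (\<sigma> i)\<^sup>2 / \<alpha>\<^sup>2 * (e i)\<^sup>2 else 0)" by simp
  show "(if (\<sigma> i)\<^sup>2 \<le> \<alpha> then (\<sigma> i)\<^sup>2 / \<alpha>\<^sup>2 * (e i)\<^sup>2 else 0)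
        \<le> 8 * (\<alpha> * (\<sigma> i)\<^sup>2 / ((\<sigma> i)\<^sup>2 + \<alpha>) ^ 3 * (e i)\<^sup>2)"
  proof (cases "(\<sigma> i)\<^sup>2 \<le> \<alpha>")
    case True
    have "(\<sigma> i)\<^sup>2 / \<alpha>\<^sup>2 * (e i)\<^sup>2 \<le> 8 * (\<alpha> * (\<sigma> i)\<^sup>2 / ((\<sigma> i)\<^sup>2 + \<alpha>) ^ 3) * (e i)\<^sup>2"
      using True sigma_pos[OF i] by (intro mult_right_mono simpleL_weight_ge_low) auto
    thus ?thesis using True by (simp add: mult_ac)
  next
    case False
    have "0 \<le> \<alpha> * (\<sigma> i)\<^sup>2 / ((\<sigma> i)\<^sup>2 + \<alpha>) ^ 3 * (e i)\<^sup>2"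
      using simpleL_weight_bounds[OF i alpha] by (intro mult_nonneg_nonneg) auto
    thus ?thesis using False by simp
  qed
qed

lemma noise2_le_psi2_noise:
  assumes mc2: "mc2 e \<alpha>"
  shows "noise2 e \<alpha> \<le> 8 * (1 + max C2 0) * psi2_noise e \<alpha>"
proof -
  define L where "L = (\<Sum>\<^sub>\<infinity>i\<in>{i\<in>I. (\<sigma> i)\<^sup>2 \<le> \<alpha>}. (\<sigma> i)\<^sup>2 / \<alpha>\<^sup>2 * (e i)\<^sup>2)"
  have L_nonneg: "0 \<le> L" by (simp add: L_def infsum_nonneg)
  have "(\<Sum>\<^sub>\<infinity>i\<in>{i\<in>I. (\<sigma> i)\<^sup>2 \<le> \<alpha>}. (\<sigma> i)\<^sup>2 / \<alpha> * (e i)\<^sup>2) = \<alpha> * L"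
    unfolding L_def infsum_cmult_right'[symmetric] using alpha
    by (intro infsum_cong) (simp add: power2_eq_square)
  hence "1 / \<alpha> * (\<Sum>\<^sub>\<infinity>i\<in>{i\<in>I. (\<sigma> i)\<^sup>2 \<ge> \<alpha>}. \<alpha> / (\<sigma> i)\<^sup>2 * (e i)\<^sup>2) \<le> 1 / \<alpha> * (C2 * (\<alpha> * L))"
    using mc2 alpha by (intro mult_left_mono) (auto simp: mc2_def)
  also have "\<dots> \<le> max C2 0 * L" using alpha L_nonneg by (simp add: mult_right_mono)
  finally have "noise2 e \<alpha> \<le> (1 + max C2 0) * L"
    using noise2_le_split by (simp add: L_def algebra_simps)
  also have "\<dots> \<le> (1 + max C2 0) * (8 * psi2_noise e \<alpha>)"
    using low_part_le_psi2_noise by (intro mult_left_mono) (auto simp: L_def)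
  finally show ?thesis by (simp only: mult_ac)
qed

end

section \<open>Convergence rates for the simple-L ratio rule\<close>

definition kappa :: real where "kappa = 16 * (1 + max C2 0)"
definition ratio_const :: real where "ratio_const = (2 * source_const + 1/2) / n0"
definition psi_const :: real where "psi_const = 2 * ratio_const * (2 * xnorm2 + 1) + 1/2"
definition small_alpha_const :: real where
  "small_alpha_const = 2 * kappa * (4 * ratio_const * xnorm2 + 2 * source_const) + 2 * source_const"
definition rate_const :: real where
  "rate_const = small_alpha_const + 1/2 + 2 * source_const * (psi_const / g0) powr (2 * m)"
definition rate_const_balanced :: "real \<Rightarrow> real" where
  "rate_const_balanced D = small_alpha_const + 1/2 + 16 * (D + 1) * psi_const"

lemma ratio_const_nonneg: "ratio_const \<ge> 0"
  using source_const_nonneg n0_pos by (simp add: ratio_const_def)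

lemma psi_const_nonneg: "psi_const \<ge> 0"
  using ratio_const_nonneg xnorm2_nonneg by (simp add: psi_const_def)

lemma small_alpha_const_nonneg: "small_alpha_const \<ge> 0"
  using ratio_const_nonneg xnorm2_nonneg source_const_nonneg
  by (simp add: small_alpha_const_def kappa_def)

lemma rate_const_nonneg: "rate_const \<ge> 0"
  using small_alpha_const_nonneg source_const_nonneg by (simp add: rate_const_def)

lemma rate_const_balanced_nonneg: "D \<ge> 0 \<Longrightarrow> rate_const_balanced D \<ge> 0"
  using small_alpha_const_nonneg psi_const_nonneg by (simp add: rate_const_balanced_def)

text \<open>Estimates relative to a reference parameter \<open>b\<close>, which is later chosen as
  \<open>\<delta>\<^bsup>2/(2m+1)\<^esup>\<close> so that both \<open>b\<^sup>2\<^sup>m\<close> and \<open>\<delta>\<^sup>2/b\<close> are at most \<open>\<rho> = \<delta>\<^bsup>4m/(2m+1)\<^esup>\<close>.\<close>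

context
  fixes \<delta> b \<rho> :: real and e :: "nat \<Rightarrow> real"
  assumes noise: "noise_level \<delta> e"
    and b: "0 < b" "b \<le> \<alpha>max" and rho: "0 < \<rho>" "\<rho> \<le> 1"
    and b_rho: "b powr (2 * m) \<le> \<rho>" and delta_rho: "\<delta>\<^sup>2 / b \<le> \<rho>"
    and rho_small: "2 * ratio_const * kappa * \<rho> \<le> 1/2"
    and e_i0: "\<bar>e i0\<bar> \<le> \<bar>\<sigma> i0 * x i0\<bar> / 2"
begin

lemma noise_summable: "(\<lambda>i. (e i)\<^sup>2) summable_on I"
  using noise by (simp add: noise_level_def)

lemma noise_level_le_rho: "b \<le> \<alpha> \<Longrightarrow> 1 / (4 * \<alpha>) * (\<Sum>\<^sub>\<infinity>i\<in>I. (e i)\<^sup>2) \<le> \<rho> / 4"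
proof -
  assume ba: "b \<le> \<alpha>"
  have S: "0 \<le> (\<Sum>\<^sub>\<infinity>i\<in>I. (e i)\<^sup>2)" "(\<Sum>\<^sub>\<infinity>i\<in>I. (e i)\<^sup>2) \<le> \<delta>\<^sup>2"
    using noise by (auto simp: noise_level_def intro: infsum_nonneg)
  have "1 / (4 * \<alpha>) * (\<Sum>\<^sub>\<infinity>i\<in>I. (e i)\<^sup>2) \<le> 1 / (4 * b) * (\<Sum>\<^sub>\<infinity>i\<in>I. (e i)\<^sup>2)"
    using ba b S by (intro mult_right_mono divide_left_mono) auto
  also have "\<dots> \<le> 1 / (4 * b) * \<delta>\<^sup>2" using S b by (intro mult_left_mono) auto
  also have "\<dots> = (\<delta>\<^sup>2 / b) / 4" by simp
  also have "\<dots> \<le> \<rho> / 4" using delta_rho by simp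
  finally show ?thesis .
qed

lemma ratio_le_at_reference: "psi2 e b / sol2 e b \<le> ratio_const * \<rho>"
proof -
  have "psi2_exact b \<le> source_const * \<rho>"
    using psi2_exact_le_powr[OF b(1)] mult_left_mono[OF b_rho source_const_nonneg] by linarith
  moreover have "psi2_noise e b \<le> \<rho> / 4"
    using psi2_noise_le_noise_level[OF noise_summable b(1)] noise_level_le_rho[OF order_refl] by linarith
  ultimately have psi: "psi2 e b \<le> (2 * source_const + 1/2) * \<rho>"
    using psi2_le[OF noise_summable b(1)] by (simp add: algebra_simps)
  have "psi2 e b / sol2 e b \<le> psi2 e b / n0"
    using n0_le_sol2[OF noise_summable b e_i0] n0_pos psi2_nonneg[OF noise_summable b(1)]
    by (intro divide_left_mono mult_pos_pos) auto
  also have "\<dots> \<le> (2 * source_const + 1/2) * \<rho> / n0"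
    using psi n0_pos by (intro divide_right_mono) auto
  finally show ?thesis by (simp add: ratio_const_def)
qed

context
  fixes a :: real
  assumes a: "0 < a" "a \<le> \<alpha>max" and minimal: "psi2 e a / sol2 e a \<le> psi2 e b / sol2 e b"
begin

lemma psi2_le_at_minimizer: "psi2 e a \<le> ratio_const * \<rho> * (2 * xnorm2 + 2 * noise2 e a)"
proof -
  have "psi2 e a / sol2 e a \<le> ratio_const * \<rho>" using minimal ratio_le_at_reference by linarith
  moreover have sol_pos: "0 < sol2 e a" using n0_le_sol2[OF noise_summable a e_i0] n0_pos by linarith
  ultimately have "psi2 e a \<le> ratio_const * \<rho> * sol2 e a" by (simp add: divide_le_eq)
  also have "\<dots> \<le> ratio_const * \<rho> * (2 * xnorm2 + 2 * noise2 e a)"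
    using sol2_le[OF noise_summable a(1)] ratio_const_nonneg rho by (intro mult_left_mono) auto
  finally show ?thesis .
qed

lemma large_alpha_bounds:
  assumes "b \<le> a"
  shows "noise2 e a \<le> \<rho> / 4" and "psi2_exact a \<le> psi_const * \<rho>"
proof -
  show noise: "noise2 e a \<le> \<rho> / 4"
    using noise2_le_noise_level[OF noise_summable a(1)] noise_level_le_rho[OF assms] by linarith
  have "ratio_const * \<rho> * (2 * xnorm2 + 2 * noise2 e a) \<le> ratio_const * \<rho> * (2 * xnorm2 + 1)"
    using noise rho ratio_const_nonneg by (intro mult_left_mono) auto
  hence "psi2 e a \<le> ratio_const * \<rho> * (2 * xnorm2 + 1)"
    using psi2_le_at_minimizer by linarith
  moreover have "psi2_noise e a \<le> \<rho> / 4"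
    using psi2_noise_le_noise_level[OF noise_summable a(1)] noise_level_le_rho[OF assms] by linarith
  ultimately have "psi2_exact a \<le> 2 * (ratio_const * \<rho> * (2 * xnorm2 + 1)) + 2 * (\<rho> / 4)"
    using psi2_exact_le[OF noise_summable a(1)] by linarith
  thus "psi2_exact a \<le> psi_const * \<rho>" by (simp add: psi_const_def algebra_simps)
qed

text \<open>For \<open>a < b\<close> the condition MC\<open>\<^sub>2\<close> bounds the propagated noise by \<open>\<psi>\<^sub>S\<^sub>L\<close>, which
  is absorbed thanks to the smallness of \<open>\<rho>\<close>.\<close>

lemma small_alpha_bound:
  assumes ab: "a < b" and mc2: "mc2 e a"
  shows "err2 e a \<le> small_alpha_const * \<rho>"
proof -
  have "a powr (2 * m) \<le> \<rho>"
    using powr_mono2[of "2 * m" a b] ab a m_pos b_rho by linarith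
  hence bias: "bias2 a \<le> source_const * \<rho>" and exact: "psi2_exact a \<le> source_const * \<rho>"
    using bias2_le_powr[OF a(1)] psi2_exact_le_powr[OF a(1)] source_const_nonneg
    by (meson mult_left_mono order_trans)+
  have noise_psi: "noise2 e a \<le> kappa * (psi2 e a + psi2_exact a)"
  proof -
    have "noise2 e a \<le> 8 * (1 + max C2 0) * psi2_noise e a"
      by (rule noise2_le_psi2_noise[OF noise_summable a(1) mc2])
    also have "\<dots> \<le> 8 * (1 + max C2 0) * (2 * psi2 e a + 2 * psi2_exact a)"
      using psi2_noise_le[OF noise_summable a(1)] by (intro mult_left_mono) auto
    finally show ?thesis by (simp add: kappa_def algebra_simps)
  qed
  have kappa: "kappa \<ge> 0" by (simp add: kappa_def)
  have "ratio_const * \<rho> * (2 * xnorm2 + 2 * noise2 e a)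
        \<le> ratio_const * \<rho> * (2 * xnorm2 + 2 * (kappa * (psi2 e a + psi2_exact a)))"
    using noise_psi ratio_const_nonneg rho by (intro mult_left_mono) auto
  hence "psi2 e a \<le> 2 * ratio_const * \<rho> * xnorm2 + (2 * ratio_const * kappa * \<rho>) * (psi2 e a + psi2_exact a)"
    using psi2_le_at_minimizer by (simp add: algebra_simps)
  also have "\<dots> \<le> 2 * ratio_const * \<rho> * xnorm2 + 1/2 * (psi2 e a + psi2_exact a)"
    using rho_small psi2_nonneg[OF noise_summable a(1)] psi2_exact_nonneg[OF noise_summable a(1)]
    by (intro add_left_mono mult_right_mono) auto
  finally have "psi2 e a \<le> 4 * ratio_const * \<rho> * xnorm2 + psi2_exact a" by (simp add: algebra_simps)
  hence "kappa * (psi2 e a + psi2_exact a) \<le> kappa * (4 * ratio_const * \<rho> * xnorm2 + 2 * source_const * \<rho>)"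
    using exact kappa by (intro mult_left_mono) auto
  hence "noise2 e a \<le> kappa * (4 * ratio_const * \<rho> * xnorm2 + 2 * source_const * \<rho>)"
    using noise_psi by linarith
  hence "err2 e a \<le> 2 * (kappa * (4 * ratio_const * \<rho> * xnorm2 + 2 * source_const * \<rho>)) + 2 * (source_const * \<rho>)"
    using err2_le[OF noise_summable a(1)] bias by linarith
  thus ?thesis by (simp add: small_alpha_const_def algebra_simps)
qed

lemma err2_le_rate:
  assumes mc2: "mc2 e a"
  shows "err2 e a \<le> rate_const * \<rho> powr (2 * m)"
proof (cases "b \<le> a")
  case True
  have "g0 * a \<le> psi_const * \<rho>"
    using g0_mult_le_psi2_exact[OF a] large_alpha_bounds(2)[OF True] by linarith
  hence "a \<le> (psi_const / g0) * \<rho>" using g0_pos by (simp add: field_simps mult.commute)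
  hence "a powr (2 * m) \<le> (psi_const / g0) powr (2 * m) * \<rho> powr (2 * m)"
    using a m_pos by (simp add: powr_mono2 flip: powr_mult)
  hence "source_const * a powr (2 * m) \<le> source_const * ((psi_const / g0) powr (2 * m) * \<rho> powr (2 * m))"
    using source_const_nonneg by (rule mult_left_mono)
  hence "bias2 a \<le> source_const * (psi_const / g0) powr (2 * m) * \<rho> powr (2 * m)"
    using bias2_le_powr[OF a(1)] by (simp add: mult.assoc)
  moreover have "\<rho> \<le> \<rho> powr (2 * m)"
    using powr_mono'[of "2 * m" 1 \<rho>] rho m_le_half by simp
  ultimately have "err2 e a \<le> 1/2 * \<rho> powr (2 * m) + 2 * source_const * (psi_const / g0) powr (2 * m) * \<rho> powr (2 * m)"
    using err2_le[OF noise_summable a(1)] large_alpha_bounds(1)[OF True] by linarith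
  also have "\<dots> = (1/2 + 2 * source_const * (psi_const / g0) powr (2 * m)) * \<rho> powr (2 * m)"
    by (simp add: algebra_simps)
  also have "\<dots> \<le> rate_const * \<rho> powr (2 * m)"
    using small_alpha_const_nonneg by (intro mult_right_mono) (auto simp: rate_const_def)
  finally show ?thesis .
next
  case False
  hence "err2 e a \<le> small_alpha_const * \<rho>" using small_alpha_bound mc2 by simp
  also have "\<dots> \<le> small_alpha_const * \<rho> powr (2 * m)"
    using powr_mono'[of "2 * m" 1 \<rho>] rho m_le_half small_alpha_const_nonneg
    by (intro mult_left_mono) auto
  also have "\<dots> \<le> rate_const * \<rho> powr (2 * m)"
    using source_const_nonneg by (intro mult_right_mono) (auto simp: rate_const_def)
  finally show ?thesis .
qed

lemma err2_le_rate_balanced: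
  assumes mc2: "mc2 e a" and D: "D \<ge> 0" and balance: "source_balance D a"
  shows "err2 e a \<le> rate_const_balanced D * \<rho>"
proof (cases "b \<le> a")
  case True
  have "8 * (D + 1) * psi2_exact a \<le> 8 * (D + 1) * (psi_const * \<rho>)"
    using large_alpha_bounds(2)[OF True] D by (intro mult_left_mono) auto
  hence "bias2 a \<le> 8 * (D + 1) * (psi_const * \<rho>)"
    using bias2_le_psi2_exact[OF a(1) D balance] by linarith
  hence "err2 e a \<le> 2 * (\<rho> / 4) + 2 * (8 * (D + 1) * (psi_const * \<rho>))"
    using err2_le[OF noise_summable a(1)] large_alpha_bounds(1)[OF True] by linarith
  also have "\<dots> \<le> rate_const_balanced D * \<rho>"
    using small_alpha_const_nonneg rho by (simp add: rate_const_balanced_def algebra_simps)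
  finally show ?thesis .
next
  case False
  hence "err2 e a \<le> small_alpha_const * \<rho>" using small_alpha_bound mc2 by simp
  also have "\<dots> \<le> rate_const_balanced D * \<rho>"
    using rho psi_const_nonneg D by (intro mult_right_mono) (auto simp: rate_const_balanced_def)
  finally show ?thesis .
qed

end

end


lemma admissible_ratio_le:
  assumes "admissible \<delta> e a" "0 < b" "b < \<alpha>max"
  shows "psi2 e a / sol2 e a \<le> psi2 e b / sol2 e b"
  using assms by (auto simp: admissible_def real_sqrt_divide[symmetric])

definition delta0 :: real where
  "delta0 = min (\<bar>\<sigma> i0 * x i0\<bar> / 2)
     (min ((min 1 (1 / (4 * ratio_const * kappa + 1))) powr ((2 * m + 1) / (4 * m)))
          ((\<alpha>max / 2) powr ((2 * m + 1) / 2)))"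

lemma delta0_pos: "delta0 > 0"
proof -
  have "0 \<le> ratio_const * kappa" using ratio_const_nonneg by (simp add: kappa_def)
  hence "0 < 4 * ratio_const * kappa + 1" by (simp add: mult.assoc)
  hence "min 1 (1 / (4 * ratio_const * kappa + 1)) \<noteq> 0" by (simp add: min_def)
  thus ?thesis using x_i0_nonzero sigma_pos[OF i0(1)] alpha_max_pos by (simp add: delta0_def)
qed

lemma reference_choice:
  assumes delta: "0 < \<delta>" "\<delta> \<le> delta0" and noise: "noise_level \<delta> e"
  defines "b \<equiv> \<delta> powr (2 / (2 * m + 1))" and "\<rho> \<equiv> \<delta> powr (4 * m / (2 * m + 1))"
  shows "0 < b" "b < \<alpha>max" "0 < \<rho>" "\<rho> \<le> 1" "b powr (2 * m) \<le> \<rho>" "\<delta>\<^sup>2 / b \<le> \<rho>"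
    and "2 * ratio_const * kappa * \<rho> \<le> 1/2" and "\<bar>e i0\<bar> \<le> \<bar>\<sigma> i0 * x i0\<bar> / 2"
proof -
  have q: "2 / (2 * m + 1) > 0" "4 * m / (2 * m + 1) > 0" using m_pos by auto
  define t where "t = min 1 (1 / (4 * ratio_const * kappa + 1))"
  have rk: "0 \<le> ratio_const * kappa" using ratio_const_nonneg by (simp add: kappa_def)
  have t: "0 < t" "t \<le> 1" using rk by (auto simp: t_def add_nonneg_pos)
  show "0 < b" "0 < \<rho>" using delta by (simp_all add: b_def \<rho>_def)
  have "b \<le> ((\<alpha>max / 2) powr ((2 * m + 1) / 2)) powr (2 / (2 * m + 1))"
    unfolding b_def using delta q by (intro powr_mono2) (auto simp: delta0_def)
  also have "\<dots> = \<alpha>max / 2" using alpha_max_pos m_pos by (simp add: powr_powr)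
  finally show "b < \<alpha>max" using alpha_max_pos by simp
  have "\<rho> \<le> (t powr ((2 * m + 1) / (4 * m))) powr (4 * m / (2 * m + 1))"
    unfolding \<rho>_def using delta q by (intro powr_mono2) (auto simp: delta0_def t_def)
  also have "\<dots> = t" using t m_pos by (simp add: powr_powr)
  finally have rho_t: "\<rho> \<le> t" .
  thus "\<rho> \<le> 1" using t by simp
  have "2 * ratio_const * kappa * \<rho> \<le> 2 * ratio_const * kappa * (1 / (4 * ratio_const * kappa + 1))"
    using rho_t rk by (intro mult_left_mono) (auto simp: t_def mult.commute)
  also have "\<dots> \<le> 1/2" using rk by (simp add: field_simps)
  finally show "2 * ratio_const * kappa * \<rho> \<le> 1/2" .
  show "b powr (2 * m) \<le> \<rho>" using m_pos by (simp add: b_def \<rho>_def powr_powr)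
  have "\<delta>\<^sup>2 / b = \<delta> powr (2 - 2 / (2 * m + 1))" using delta by (simp add: b_def powr_diff)
  also have "2 - 2 / (2 * m + 1) = 4 * m / (2 * m + 1)" using m_pos by (simp add: field_simps)
  finally show "\<delta>\<^sup>2 / b \<le> \<rho>" by (simp add: \<rho>_def)
  have "(e i0)\<^sup>2 \<le> (\<Sum>\<^sub>\<infinity>i\<in>I. (e i)\<^sup>2)"
    using noise i0(1) by (intro term_le_infsum) (auto simp: noise_level_def)
  also have "\<dots> \<le> \<delta>\<^sup>2" using noise by (simp add: noise_level_def)
  finally have "\<bar>e i0\<bar> \<le> \<delta>" using delta power2_le_imp_le[of "\<bar>e i0\<bar>" \<delta>] by simp
  thus "\<bar>e i0\<bar> \<le> \<bar>\<sigma> i0 * x i0\<bar> / 2" using delta by (simp add: delta0_def)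
qed

lemma err2_le_rates:
  assumes adm: "admissible \<delta> e a" and small: "\<delta> \<le> delta0"
  shows "err2 e a \<le> rate_const * \<delta> powr (4 * m / (2 * m + 1) * (2 * m))"
    and "D \<ge> 0 \<Longrightarrow> source_balance D a \<Longrightarrow> err2 e a \<le> rate_const_balanced D * \<delta> powr (4 * m / (2 * m + 1))"
proof -
  from adm have delta: "0 < \<delta>" and noise: "noise_level \<delta> e" and a: "0 < a" "a \<le> \<alpha>max"
    and mc2: "mc2 e a"
    by (auto simp: admissible_def)
  note ref = reference_choice[OF delta small noise]
  note minimal = admissible_ratio_le[OF adm ref(1,2)]
  show "err2 e a \<le> rate_const * \<delta> powr (4 * m / (2 * m + 1) * (2 * m))"
    using err2_le_rate[OF noise ref(1) less_imp_le[OF ref(2)] ref(3-8) a minimal mc2] delta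
    by (simp add: powr_powr)
  show "err2 e a \<le> rate_const_balanced D * \<delta> powr (4 * m / (2 * m + 1))"
    if "D \<ge> 0" "source_balance D a"
    by (rule err2_le_rate_balanced[OF noise ref(1) less_imp_le[OF ref(2)] ref(3-8) a minimal mc2 that])
qed

theorem convergence_rates:
  assumes D: "D \<ge> 0"
  obtains C \<delta>0 where "C > 0" "\<delta>0 > 0"
    and "\<And>\<delta> e a. admissible \<delta> e a \<Longrightarrow> \<delta> \<le> \<delta>0 \<Longrightarrow>
           sqrt (err2 e a) \<le> C * \<delta> powr (2 * m / (2 * m + 1) * (2 * m))"
    and "\<And>\<delta> e a. admissible \<delta> e a \<Longrightarrow> \<delta> \<le> \<delta>0 \<Longrightarrow> (\<forall>\<alpha>\<in>{0<..<\<alpha>max}. source_balance D \<alpha>) \<Longrightarrow>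
           sqrt (err2 e a) \<le> C * \<delta> powr (2 * m / (2 * m + 1))"
proof
  define C where "C = sqrt rate_const + sqrt (rate_const_balanced D) + 1"
  have sqrt_nonneg: "0 \<le> sqrt rate_const" "0 \<le> sqrt (rate_const_balanced D)"
    using rate_const_nonneg rate_const_balanced_nonneg[OF D] by simp_all
  hence C: "sqrt rate_const \<le> C" "sqrt (rate_const_balanced D) \<le> C" by (simp_all add: C_def)
  show "C > 0" unfolding C_def using sqrt_nonneg by linarith
  show "delta0 > 0" by (rule delta0_pos)
  have sqrt_powr: "sqrt (K * \<delta> powr q) = sqrt K * \<delta> powr (q / 2)" if "0 < \<delta>" for K \<delta> q :: real
    using that by (simp add: real_sqrt_mult powr_half_sqrt_powr)
  have exponents: "4 * m / (2 * m + 1) * (2 * m) / 2 = 2 * m / (2 * m + 1) * (2 * m)"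
    "4 * m / (2 * m + 1) / 2 = 2 * m / (2 * m + 1)"
    using m_pos by (simp_all add: field_simps)
  fix \<delta> e a assume adm: "admissible \<delta> e a" and small: "\<delta> \<le> delta0"
  have delta: "0 < \<delta>" and a: "a \<in> {0<..<\<alpha>max}" using adm by (auto simp: admissible_def)
  have "sqrt (err2 e a) \<le> sqrt (rate_const * \<delta> powr (4 * m / (2 * m + 1) * (2 * m)))"
    using err2_le_rates(1)[OF adm small] by (rule real_sqrt_le_mono)
  also have "\<dots> = sqrt rate_const * \<delta> powr (2 * m / (2 * m + 1) * (2 * m))"
    unfolding sqrt_powr[OF delta] exponents ..
  also have "\<dots> \<le> C * \<delta> powr (2 * m / (2 * m + 1) * (2 * m))"
    using C(1) by (intro mult_right_mono) auto
  finally show "sqrt (err2 e a) \<le> C * \<delta> powr (2 * m / (2 * m + 1) * (2 * m))" .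
  assume "\<forall>\<alpha>\<in>{0<..<\<alpha>max}. source_balance D \<alpha>"
  hence "err2 e a \<le> rate_const_balanced D * \<delta> powr (4 * m / (2 * m + 1))"
    using err2_le_rates(2)[OF adm small D] a by blast
  hence "sqrt (err2 e a) \<le> sqrt (rate_const_balanced D * \<delta> powr (4 * m / (2 * m + 1)))"
    by (rule real_sqrt_le_mono)
  also have "\<dots> = sqrt (rate_const_balanced D) * \<delta> powr (2 * m / (2 * m + 1))"
    unfolding sqrt_powr[OF delta] exponents ..
  also have "\<dots> \<le> C * \<delta> powr (2 * m / (2 * m + 1))"
    using C(2) by (intro mult_right_mono) auto
  finally show "sqrt (err2 e a) \<le> C * \<delta> powr (2 * m / (2 * m + 1))" .
qed

end


lemma AstarA_pow_eq_0:
  "(\<And>i. i \<in> I \<Longrightarrow> inner \<omega> (u i) = 0) \<Longrightarrow> AstarA_pow I \<sigma> u \<mu> \<omega> = 0"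
  unfolding AstarA_pow_def by (simp add: infsum_0)

locale tikhonov_source = compact_singular_system A I \<sigma> u v
  for A :: "'a::{real_inner,complete_space} \<Rightarrow> 'b::{real_inner,complete_space}" and I \<sigma> u v +
  fixes \<omega> :: 'a and \<mu> \<Lambda> \<alpha>max C2 :: real and i0 :: nat
  assumes sigma_sq_le: "\<And>i. i \<in> I \<Longrightarrow> (\<sigma> i)\<^sup>2 \<le> \<Lambda>"
    and alpha_max_pos: "\<alpha>max > 0" and mu_pos: "0 < \<mu>"
    and i0: "i0 \<in> I" "inner \<omega> (u i0) \<noteq> 0"
begin

sublocale coeffs: tikhonov_coefficients I \<sigma> "\<lambda>i. inner \<omega> (u i)" \<mu> \<Lambda> \<alpha>max C2 i0
  using sigma_pos sigma_sq_le alpha_max_pos mu_pos bessel_inequality(1)[OF orthonormal_u] i0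
  by unfold_locales auto

abbreviation xdag :: 'a where "xdag \<equiv> AstarA_pow I \<sigma> u \<mu> \<omega>"

lemma inner_xdag_u: "i \<in> I \<Longrightarrow> inner xdag (u i) = coeffs.x i"
  using orthonormal_series_coeff[OF orthonormal_u coeffs.x_sq_summable]
  by (simp add: AstarA_pow_def coeffs.x_def)

lemma inner_data_v: "i \<in> I \<Longrightarrow> inner (A xdag + e) (v i) = coeffs.y (\<lambda>i. inner e (v i)) i"
  using inner_A_v inner_xdag_u by (simp add: inner_add_left coeffs.y_def)

lemma psiSLR_eq:
  assumes "0 < \<alpha>"
  shows "psiSLR A I \<sigma> v (A xdag + e) \<alpha>
           = sqrt (coeffs.psi2 (\<lambda>i. inner e (v i)) \<alpha>) / sqrt (coeffs.sol2 (\<lambda>i. inner e (v i)) \<alpha>)"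
proof -
  have "(norm (tikh A \<alpha> (A xdag + e)))\<^sup>2 = coeffs.sol2 (\<lambda>i. inner e (v i)) \<alpha>"
    unfolding norm_tikh_sq[OF assms] coeffs.sol2_def by (intro infsum_cong) (simp add: inner_data_v)
  hence "norm (tikh A \<alpha> (A xdag + e)) = sqrt (coeffs.sol2 (\<lambda>i. inner e (v i)) \<alpha>)"
    by (metis norm_ge_zero real_sqrt_unique)
  moreover have "psiSL I \<sigma> v (A xdag + e) \<alpha> = sqrt (coeffs.psi2 (\<lambda>i. inner e (v i)) \<alpha>)"
    unfolding psiSL_def coeffs.psi2_def by (intro arg_cong[where f=sqrt] infsum_cong) (simp add: inner_data_v)
  ultimately show ?thesis by (simp add: psiSLR_def)
qed

lemma tikh_error_eq:
  assumes "0 < \<alpha>"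
  shows "norm (tikh A \<alpha> (A xdag + e) - xdag) = sqrt (coeffs.err2 (\<lambda>i. inner e (v i)) \<alpha>)"
proof -
  have "(\<Sum>\<^sub>\<infinity>i\<in>I. coeffs.x i *\<^sub>R u i) = xdag" by (simp add: AstarA_pow_def coeffs.x_def)
  hence "(norm (tikh A \<alpha> (A xdag + e) - xdag))\<^sup>2
         = (\<Sum>\<^sub>\<infinity>i\<in>I. (tikh_coeff \<alpha> (A xdag + e) i - coeffs.x i)\<^sup>2)"
    using norm_tikh_diff_sq[OF assms coeffs.x_sq_summable, of "A xdag + e"] by simp
  also have "\<dots> = coeffs.err2 (\<lambda>i. inner e (v i)) \<alpha>"
    unfolding coeffs.err2_def by (intro infsum_cong) (simp add: tikh_coeff_def inner_data_v)
  finally have "(norm (tikh A \<alpha> (A xdag + e) - xdag))\<^sup>2 = coeffs.err2 (\<lambda>i. inner e (v i)) \<alpha>" .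
  thus ?thesis by (metis norm_ge_zero real_sqrt_unique)
qed

lemma admissible_coeffs:
  assumes delta: "0 < \<delta>" "norm e \<le> \<delta>" and mc2: "MC2 C2 I \<sigma> v \<alpha>max e" and a: "a \<in> {0<..<\<alpha>max}"
    and minimal: "\<forall>\<alpha>\<in>{0<..<\<alpha>max}. psiSLR A I \<sigma> v (A xdag + e) a \<le> psiSLR A I \<sigma> v (A xdag + e) \<alpha>"
  shows "coeffs.admissible \<delta> (\<lambda>i. inner e (v i)) a"
proof -
  have "(\<Sum>\<^sub>\<infinity>i\<in>I. (inner e (v i))\<^sup>2) \<le> \<delta>\<^sup>2"
    using bessel_inequality(2)[OF orthonormal_v, of e] power_mono[OF delta(2) norm_ge_zero, of 2] by linarith
  thus ?thesis
    using delta mc2 a minimal bessel_inequality(1)[OF orthonormal_v, of e]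
    by (auto simp: coeffs.admissible_def coeffs.noise_level_def coeffs.mc2_def MC2_def psiSLR_eq)
qed

lemma source_balance_iff:
  "coeffs.source_balance D \<alpha> \<longleftrightarrow>
     (\<Sum>\<^sub>\<infinity>i\<in>{i\<in>I. (\<sigma> i)\<^sup>2 \<le> \<alpha>}. (inner xdag (u i))\<^sup>2)
       \<le> D * (\<Sum>\<^sub>\<infinity>i\<in>{i\<in>I. (\<sigma> i)\<^sup>2 \<ge> \<alpha>}. \<alpha> / (\<sigma> i)\<^sup>2 * (inner xdag (u i))\<^sup>2)"
proof -
  have "(\<Sum>\<^sub>\<infinity>i\<in>{i\<in>I. (\<sigma> i)\<^sup>2 \<le> \<alpha>}. (inner xdag (u i))\<^sup>2) = (\<Sum>\<^sub>\<infinity>i\<in>{i\<in>I. (\<sigma> i)\<^sup>2 \<le> \<alpha>}. (coeffs.x i)\<^sup>2)"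
    and "(\<Sum>\<^sub>\<infinity>i\<in>{i\<in>I. (\<sigma> i)\<^sup>2 \<ge> \<alpha>}. \<alpha> / (\<sigma> i)\<^sup>2 * (inner xdag (u i))\<^sup>2)
         = (\<Sum>\<^sub>\<infinity>i\<in>{i\<in>I. (\<sigma> i)\<^sup>2 \<ge> \<alpha>}. \<alpha> / (\<sigma> i)\<^sup>2 * (coeffs.x i)\<^sup>2)"
    by (intro infsum_cong; simp add: inner_xdag_u)+
  thus ?thesis by (simp only: coeffs.source_balance_def)
qed

end


theorem mainTheorem9:
  fixes A :: "'a::{real_inner,complete_space} \<Rightarrow> 'b::{real_inner,complete_space}"
    and I :: "nat set" and \<sigma> :: "nat \<Rightarrow> real" and u :: "nat \<Rightarrow> 'a" and v :: "nat \<Rightarrow> 'b"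
    and xd :: 'a and \<omega> :: 'a and \<mu> Cs C2 \<alpha>max :: real
  assumes cpt: "compact_op A"
    and sys: "singular_system A I \<sigma> u v"
    and amax: "\<alpha>max > 0"
    and xd_perp: "xd \<in> orthogonal_comp {x. A x = 0}"
    and xd_nz: "xd \<noteq> 0"
    and src: "xd = AstarA_pow I \<sigma> u \<mu> \<omega>"
    and wbd: "norm \<omega> \<le> Cs"
    and mu: "0 < \<mu>" "\<mu> \<le> 1"
  shows "\<exists>C>0. \<exists>\<delta>0>0.
    (\<forall>\<delta> e \<alpha>s. 0 < \<delta> \<and> \<delta> \<le> \<delta>0 \<and> norm e \<le> \<delta> \<and> MC2 C2 I \<sigma> v \<alpha>max e \<and>
        \<alpha>s \<in> {0<..<\<alpha>max} \<and>
        (\<forall>\<alpha>\<in>{0<..<\<alpha>max}. psiSLR A I \<sigma> v (A xd + e) \<alpha>s \<le> psiSLR A I \<sigma> v (A xd + e) \<alpha>)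
      \<longrightarrow> norm (tikh A \<alpha>s (A xd + e) - xd)
          \<le> C * \<delta> powr (2 * min \<mu> (1/2) / (2 * min \<mu> (1/2) + 1) * (2 * min \<mu> (1/2)))) \<and>
    ((\<exists>D>0. \<forall>\<alpha>\<in>{0<..<\<alpha>max}.
        (\<Sum>\<^sub>\<infinity>i\<in>{i\<in>I. (\<sigma> i)\<^sup>2 \<le> \<alpha>}. (inner xd (u i))\<^sup>2)
        \<le> D * (\<Sum>\<^sub>\<infinity>i\<in>{i\<in>I. (\<sigma> i)\<^sup>2 \<ge> \<alpha>}. \<alpha> / (\<sigma> i)\<^sup>2 * (inner xd (u i))\<^sup>2))
     \<longrightarrow> (\<forall>\<delta> e \<alpha>s. 0 < \<delta> \<and> \<delta> \<le> \<delta>0 \<and> norm e \<le> \<delta> \<and> MC2 C2 I \<sigma> v \<alpha>max e \<and>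
        \<alpha>s \<in> {0<..<\<alpha>max} \<and>
        (\<forall>\<alpha>\<in>{0<..<\<alpha>max}. psiSLR A I \<sigma> v (A xd + e) \<alpha>s \<le> psiSLR A I \<sigma> v (A xd + e) \<alpha>)
      \<longrightarrow> norm (tikh A \<alpha>s (A xd + e) - xd)
          \<le> C * \<delta> powr (2 * min \<mu> (1/2) / (2 * min \<mu> (1/2) + 1))))"
proof -
  interpret compact_singular_system A I \<sigma> u v using cpt sys by unfold_locales
  obtain \<Lambda> where \<Lambda>: "\<forall>i\<in>I. (\<sigma> i)\<^sup>2 \<le> \<Lambda>" using singular_values_bounded by blast
  obtain i0 where i0: "i0 \<in> I" "inner \<omega> (u i0) \<noteq> 0" using xd_nz src AstarA_pow_eq_0 by blast
  interpret tikhonov_source A I \<sigma> u v \<omega> \<mu> \<Lambda> \<alpha>max C2 i0 using \<Lambda> amax mu i0 by unfold_locales auto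
  define balanced where "balanced D \<longleftrightarrow> (\<forall>\<alpha>\<in>{0<..<\<alpha>max}. coeffs.source_balance D \<alpha>)" for D
  \<comment> \<open>\<open>C\<close> is chosen before the balance constant is known, so one is fixed in advance.\<close>
  obtain D where D: "D \<ge> 0" "(\<exists>D>0. balanced D) \<Longrightarrow> balanced D" by (metis less_eq_real_def order_refl)
  obtain C \<delta>0 where C: "C > 0" "\<delta>0 > 0"
    and rate: "\<And>\<delta> e a. coeffs.admissible \<delta> e a \<Longrightarrow> \<delta> \<le> \<delta>0 \<Longrightarrow>
                 sqrt (coeffs.err2 e a) \<le> C * \<delta> powr (2 * coeffs.m / (2 * coeffs.m + 1) * (2 * coeffs.m))"
    and rate_balanced: "\<And>\<delta> e a. coeffs.admissible \<delta> e a \<Longrightarrow> \<delta> \<le> \<delta>0 \<Longrightarrow> balanced D \<Longrightarrow>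
                 sqrt (coeffs.err2 e a) \<le> C * \<delta> powr (2 * coeffs.m / (2 * coeffs.m + 1))"
    using coeffs.convergence_rates[OF D(1)] unfolding balanced_def by blast
  show ?thesis
    unfolding src coeffs.m_def[symmetric]
    by (rule exI[of _ C], rule conjI[OF C(1)], rule exI[of _ \<delta>0], rule conjI[OF C(2)])
       (use rate[OF admissible_coeffs] rate_balanced[OF admissible_coeffs] D(2) in
         \<open>simp add: tikh_error_eq balanced_def source_balance_iff\<close>)
qed

end
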